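(* Let $A$ be a $0$-$1$ matrix over a set $\mathcal G$ with no identically zero rows. For $\xi\in\widetilde\Omega_A$ let $R_\xi(e)=\{x\in\mathcal G:x^{-1}\in\xi\}\in2^{\mathcal G}$, and let $\sigma(\xi)_1$ be the unique element of $\xi\cap\mathcal G$ if this set is nonempty and $\sigma(\xi)_1=\star\in\tilde{\mathcal G}$ otherwise. (i) The map $\xi\mapsto(\sigma(\xi)_1,R_\xi(e))$ is a continuous surjection of $\widetilde\Omega_A$ onto $\tilde\Gamma_A$, mapping $\Omega_A$ onto $\Gamma_A$. (ii) The homomorphism $\psi:\tilde R_A\to C(\widetilde\Omega_A)$ defined by $\psi(f)(\xi)=\hat f(\sigma(\xi)_1,R_\xi(e))$ is injective and satisfies $\psi(\delta_i)=P_i$ and $\psi(\rho_i)=Q_i$ for all $i\in\mathcal G$, where $P_i$ and $Q_i$ are the characteristic functions of $\Delta_i$ and $\Delta_{i^{-1}}$ respectively. Consequently $\tilde R_A\cong C^*(\{\mathbf I,P_i,Q_i:i\in\mathcal G\})$ and $R_A\cong C^*(\{P_i,Q_i:i\in\mathcal G\})$.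
   Context: $\mathbb F$ is the free group on $\mathcal G$, $\mathbb F^+$ the unital subsemigroup generated by $\mathcal G$; $2^{\mathbb F}$ is the set of subsets of $\mathbb F$ with the product topology. A subset of $\mathbb F$ is convex if it contains the shortest path between any two of its elements. $\Omega_A^\tau$ is the set of $\xi\subset\mathbb F$ with: $e\in\xi$, $\xi$ convex; if $\omega\in\xi$ there is at most one $y\in\mathcal G$ with $\omega y\in\xi$; if $\omega,\omega y\in\xi$ ($y\in\mathcal G$) then for $x\in\mathcal G$, $\omega x^{-1}\in\xi\iff A(x,y)=1$. $\xi$ is unbounded if it has no upper bound for the order $s\le t\iff s^{-1}t\in\mathbb F^+$. $\widetilde\Omega_A$ is the closure in $\Omega_A^\tau$ of the unbounded elements, $\Omega_A=\widetilde\Omega_A\setminus\{\{e\}\}$, and $\Delta_t=\{\xi\in\widetilde\Omega_A:t\in\xi\}$ for $t\in\mathbb F$. (Under the known isomorphism $\widetilde{\mathcal O}_A\cong C(\widetilde\Omega_A)\rtimes\mathbb F$, $P_i$ corresponds to $S_iS_i^*$ and $Q_i$ to $S_i^*S_i$.) $\rho_i(j)=A(i,j)$ and $\delta_i=$ indicator of $\{i\}$, as functions on $\mathcal G$; $R_A\subset\ell^\infty(\mathcal G)$ is the $C^*$-algebra generated by all $\rho_i,\delta_i$, and $\tilde R_A$ its unitization inside $\ell^\infty(\mathcal G)$. $\tilde{\mathcal G}=\mathcal G\cup\{\star\}$ is the one-point compactification of discrete $\mathcal G$; $c_j(i)=A(i,j)$; $\tilde\Gamma_A$ is the closure of $\{(j,c_j):j\in\mathcal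 G\}$ in $\tilde{\mathcal G}\times\{0,1\}^{\mathcal G}$, and $\Gamma_A=\tilde\Gamma_A\setminus\{(\star,\mathbf 0)\}$. Identifying $j$ with $(j,c_j)$, every $f\in\tilde R_A$ has a unique continuous extension $\hat f$ to $\tilde\Gamma_A$. *)

theory Defs
  imports "HOL-Analysis.Analysis"
begin

section \<open>Free group on the generating set (= the type 'g), as reduced words\<close>

text \<open>A letter (x, True) stands for the generator x, (x, False) for its inverse.\<close>
type_synonym 'g word = "('g \<times> bool) list"

definition flip_letter :: "'g \<times> bool \<Rightarrow> 'g \<times> bool" where
  "flip_letter l = (fst l, \<not> snd l)"

fun reduced :: "'g word \<Rightarrow> bool" where
  "reduced (a # b # w) = (b \<noteq> flip_letter a \<and> reduced (b # w))"
| "reduced _ = True"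

definition FG :: "'g word set" where
  "FG = {w. reduced w}"

text \<open>Push a letter on a reversed reduced word, cancelling if possible.\<close>
fun push_letter :: "'g word \<Rightarrow> 'g \<times> bool \<Rightarrow> 'g word" where
  "push_letter [] x = [x]"
| "push_letter (y # s) x = (if y = flip_letter x then s else x # y # s)"

text \<open>Group product of reduced words (free reduction of the concatenation).\<close>
definition fg_mult :: "'g word \<Rightarrow> 'g word \<Rightarrow> 'g word" where
  "fg_mult u v = rev (foldl push_letter (rev u) v)"

definition fg_inv :: "'g word \<Rightarrow> 'g word" where
  "fg_inv w = rev (map flip_letter w)"

definition fg_unit :: "'g word" where
  "fg_unit = []"

definition gen :: "'g \<Rightarrow> 'g word" where
  "gen x = [(x, True)]"

definition gen_inv :: "'g \<Rightarrow> 'g word" where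
  "gen_inv x = [(x, False)]"

definition FGplus :: "'g word set" where
  "FGplus = {w \<in> FG. list_all snd w}"

definition fg_le :: "'g word \<Rightarrow> 'g word \<Rightarrow> bool" where
  "fg_le s t = (fg_mult (fg_inv s) t \<in> FGplus)"

text \<open>Convexity: with s, t the set contains the geodesic s, s a1, s a1 a2, ..., t
  where s^{-1} t = a1 ... an is reduced.\<close>
definition convex_fg :: "'g word set \<Rightarrow> bool" where
  "convex_fg \<xi> = (\<forall>s\<in>\<xi>. \<forall>t\<in>\<xi>. \<forall>k \<le> length (fg_mult (fg_inv s) t).
       fg_mult s (take k (fg_mult (fg_inv s) t)) \<in> \<xi>)"

text \<open>The 0-1 matrix A over 'g is a relation A :: 'g \<Rightarrow> 'g \<Rightarrow> bool.\<close>
definition OmegaTau :: "('g \<Rightarrow> 'g \<Rightarrow> bool) \<Rightarrow> 'g word set set" where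
  "OmegaTau A = {\<xi>. \<xi> \<subseteq> FG \<and> fg_unit \<in> \<xi> \<and> convex_fg \<xi>
      \<and> (\<forall>\<omega>\<in>\<xi>. \<forall>y1 y2. fg_mult \<omega> (gen y1) \<in> \<xi> \<and> fg_mult \<omega> (gen y2) \<in> \<xi> \<longrightarrow> y1 = y2)
      \<and> (\<forall>\<omega>\<in>\<xi>. \<forall>y. fg_mult \<omega> (gen y) \<in> \<xi> \<longrightarrow>
            (\<forall>x. fg_mult \<omega> (gen_inv x) \<in> \<xi> \<longleftrightarrow> A x y))}"

definition fg_unbounded :: "'g word set \<Rightarrow> bool" where
  "fg_unbounded \<xi> = (\<not> (\<exists>t\<in>FG. \<forall>s\<in>\<xi>. fg_le s t))"

text \<open>Product topology on 2^X, via characteristic functions (the subspace of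
  subsets of F carries the product topology of 2^F).\<close>
definition powtop :: "'a set topology" where
  "powtop = pullback_topology UNIV (\<lambda>S x. x \<in> S) euclidean"

definition OmegaTilde :: "('g \<Rightarrow> 'g \<Rightarrow> bool) \<Rightarrow> 'g word set set" where
  "OmegaTilde A = (subtopology powtop (OmegaTau A)) closure_of {\<xi> \<in> OmegaTau A. fg_unbounded \<xi>}"

definition Omega :: "('g \<Rightarrow> 'g \<Rightarrow> bool) \<Rightarrow> 'g word set set" where
  "Omega A = OmegaTilde A - {{fg_unit}}"

definition Delta :: "('g \<Rightarrow> 'g \<Rightarrow> bool) \<Rightarrow> 'g word \<Rightarrow> 'g word set set" where
  "Delta A t = {\<xi> \<in> OmegaTilde A. t \<in> \<xi>}"

text \<open>One-point compactification of the discrete set 'g: None plays the role of \<star>.\<close>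
definition tildeG_top :: "'g option topology" where
  "tildeG_top = topology (\<lambda>U. None \<notin> U \<or> finite (- U))"

text \<open>c_j(i) = A(i,j); elements of {0,1}^G are functions 'g \<Rightarrow> bool (product topology).\<close>
definition col :: "('g \<Rightarrow> 'g \<Rightarrow> bool) \<Rightarrow> 'g \<Rightarrow> ('g \<Rightarrow> bool)" where
  "col A j = (\<lambda>i. A i j)"

definition Gamma_top :: "('g option \<times> ('g \<Rightarrow> bool)) topology" where
  "Gamma_top = prod_topology tildeG_top euclidean"

definition GammaTilde :: "('g \<Rightarrow> 'g \<Rightarrow> bool) \<Rightarrow> ('g option \<times> ('g \<Rightarrow> bool)) set" where
  "GammaTilde A = Gamma_top closure_of {(Some j, col A j) | j. True}"

definition Gamma :: "('g \<Rightarrow> 'g \<Rightarrow> bool) \<Rightarrow> ('g option \<times> ('g \<Rightarrow> bool)) set" where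
  "Gamma A = GammaTilde A - {(None, \<lambda>_. False)}"

definition sigma1 :: "'g word set \<Rightarrow> 'g option" where
  "sigma1 \<xi> = (if \<exists>x. gen x \<in> \<xi> then Some (THE x. gen x \<in> \<xi>) else None)"

definition Rxi :: "'g word set \<Rightarrow> ('g \<Rightarrow> bool)" where
  "Rxi \<xi> = (\<lambda>x. gen_inv x \<in> \<xi>)"

definition phiA :: "'g word set \<Rightarrow> 'g option \<times> ('g \<Rightarrow> bool)" where
  "phiA \<xi> = (sigma1 \<xi>, Rxi \<xi>)"

inductive_set star_alg :: "('x \<Rightarrow> complex) set \<Rightarrow> ('x \<Rightarrow> complex) set" for S where
  gen: "f \<in> S \<Longrightarrow> f \<in> star_alg S"
| zero: "(\<lambda>_. 0) \<in> star_alg S"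
| add: "f \<in> star_alg S \<Longrightarrow> g \<in> star_alg S \<Longrightarrow> (\<lambda>x. f x + g x) \<in> star_alg S"
| smult: "f \<in> star_alg S \<Longrightarrow> (\<lambda>x. c * f x) \<in> star_alg S"
| mult: "f \<in> star_alg S \<Longrightarrow> g \<in> star_alg S \<Longrightarrow> (\<lambda>x. f x * g x) \<in> star_alg S"
| conj: "f \<in> star_alg S \<Longrightarrow> (\<lambda>x. cnj (f x)) \<in> star_alg S"

definition cstar_gen :: "('x \<Rightarrow> complex) set \<Rightarrow> ('x \<Rightarrow> complex) set" where
  "cstar_gen S = {f. \<forall>\<epsilon>>0. \<exists>g\<in>star_alg S. \<forall>x. cmod (f x - g x) \<le> \<epsilon>}"

definition rho :: "('g \<Rightarrow> 'g \<Rightarrow> bool) \<Rightarrow> 'g \<Rightarrow> 'g \<Rightarrow> complex" where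
  "rho A i = (\<lambda>j. if A i j then 1 else 0)"

definition delta :: "'g \<Rightarrow> 'g \<Rightarrow> complex" where
  "delta i = (\<lambda>j. if j = i then 1 else 0)"

definition RA :: "('g \<Rightarrow> 'g \<Rightarrow> bool) \<Rightarrow> ('g \<Rightarrow> complex) set" where
  "RA A = cstar_gen ({rho A i | i. True} \<union> {delta i | i. True})"

text \<open>Unitization inside l^\<infinity>(G): R_A + C 1.\<close>
definition RAtilde :: "('g \<Rightarrow> 'g \<Rightarrow> bool) \<Rightarrow> ('g \<Rightarrow> complex) set" where
  "RAtilde A = cstar_gen ({\<lambda>_. 1} \<union> {rho A i | i. True} \<union> {delta i | i. True})"

text \<open>The unique continuous extension of f to GammaTilde (set to 0 off GammaTilde).\<close>
definition hat :: "('g \<Rightarrow> 'g \<Rightarrow> bool) \<Rightarrow> ('g \<Rightarrow> complex) \<Rightarrow> ('g option \<times> ('g \<Rightarrow> bool) \<Rightarrow> complex)" where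
  "hat A f = (THE h. continuous_map (subtopology Gamma_top (GammaTilde A)) euclidean h
                   \<and> (\<forall>j. h (Some j, col A j) = f j)
                   \<and> (\<forall>p. p \<notin> GammaTilde A \<longrightarrow> h p = 0))"

text \<open>Elements of C(OmegaTilde) are represented as functions vanishing off OmegaTilde.\<close>
definition psiA :: "('g \<Rightarrow> 'g \<Rightarrow> bool) \<Rightarrow> ('g \<Rightarrow> complex) \<Rightarrow> 'g word set \<Rightarrow> complex" where
  "psiA A f = (\<lambda>\<xi>. if \<xi> \<in> OmegaTilde A then hat A f (phiA \<xi>) else 0)"

definition charfun :: "'a set \<Rightarrow> 'a \<Rightarrow> complex" where
  "charfun S = (\<lambda>x. if x \<in> S then 1 else 0)"

definition PA :: "('g \<Rightarrow> 'g \<Rightarrow> bool) \<Rightarrow> 'g \<Rightarrow> 'g word set \<Rightarrow> complex" where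
  "PA A i = charfun (Delta A (gen i))"

definition QA :: "('g \<Rightarrow> 'g \<Rightarrow> bool) \<Rightarrow> 'g \<Rightarrow> 'g word set \<Rightarrow> complex" where
  "QA A i = charfun (Delta A (gen_inv i))"

end

theory Submission
  imports Defs "HOL-Library.Sublist"
begin

(* An unbounded element of OmegaTau_A contains a generator: otherwise all its words consist of
   inverse letters and the unit bounds it. So phi maps the unbounded elements into the copy
   {(j, c_j)} of G and, membership of a fixed word being a clopen condition, maps their closure
   OmegaTilde_A continuously into GammaTilde_A. Conversely, as A has no zero rows we may fix
   successors A(i, nx i); for every j the ray j, nx j, nx^2 j, ... together with all A-admissible
   descents along inverse letters is an unbounded element lying over (j, c_j). Hence the compact
   image of OmegaTilde_A contains a dense subset of GammaTilde_A and is all of it; only {e} lies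
   over (star, 0).
   Functions on G that extend continuously to GammaTilde_A form a *-algebra closed under uniform
   limits, because extending does not increase the sup norm; it contains 1, delta_i and rho_i,
   whose extensions are indicators of clopen sets. Thus psi f = hat f o phi is a contractive
   *-homomorphism which is inverted by evaluation at points over (j, c_j), hence isometric, and it
   carries the C*-algebra generated by a set onto the one generated by its image. *)

section \<open>Reduced words and convexity\<close>

lemma flip_letter_flip_letter [simp]: "flip_letter (flip_letter a) = a"
  by (cases a) (simp add: flip_letter_def)

lemma flip_letter_eq_iff: "flip_letter a = b \<longleftrightarrow> a = flip_letter b"
  by auto

lemma reduced_Cons_iff: "reduced (a # w) \<longleftrightarrow> reduced w \<and> (w = [] \<or> hd w \<noteq> flip_letter a)"
  by (cases w) auto

lemma reduced_append:
  "reduced (u @ v) \<longleftrightarrow> reduced u \<and> reduced v \<and> (u = [] \<or> v = [] \<or> hd v \<noteq> flip_letter (last u))"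
  by (induction u) (auto simp: reduced_Cons_iff)

lemma reduced_take: "reduced w \<Longrightarrow> reduced (take k w)"
  by (metis append_take_drop_id reduced_append)

lemma reduced_if_list_all: "list_all (\<lambda>l. snd l = b) w \<Longrightarrow> reduced w"
  by (induction w) (auto simp: reduced_Cons_iff flip_letter_def neq_Nil_conv)

lemma fg_inv_Nil [simp]: "fg_inv [] = []"
  by (simp add: fg_inv_def)

lemma fg_inv_append: "fg_inv (u @ v) = fg_inv v @ fg_inv u"
  by (simp add: fg_inv_def)

lemma fg_inv_fg_inv [simp]: "fg_inv (fg_inv u) = u"
  by (simp add: fg_inv_def rev_map comp_def)

lemma length_fg_inv [simp]: "length (fg_inv u) = length u"
  by (simp add: fg_inv_def)

lemma reduced_fg_inv: "reduced w \<Longrightarrow> reduced (fg_inv w)"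
proof (induction w)
  case (Cons a w)
  then show ?case
    by (auto simp: reduced_Cons_iff fg_inv_def reduced_append last_rev last_map hd_map flip_letter_eq_iff)
qed simp

lemma fg_mult_cancel: "fg_mult (u @ fg_inv c) (c @ v) = fg_mult u v"
proof -
  have "foldl push_letter (map flip_letter c @ r) c = r" for r
    by (induction c) auto
  then show ?thesis
    by (simp add: fg_mult_def fg_inv_def rev_map)
qed

lemma fg_mult_Nil_right [simp]: "fg_mult u [] = u"
  by (simp add: fg_mult_def)

lemma fg_mult_reduced_append: "reduced (u @ v) \<Longrightarrow> fg_mult u v = u @ v"
proof -
  have "reduced (u @ v) \<Longrightarrow> foldl push_letter (rev u) v = rev v @ rev u" for u
  proof (induction v arbitrary: u)
    case (Cons a v)
    have "push_letter (rev u) a = a # rev u"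
      using Cons.prems by (cases u rule: rev_cases) (auto simp: reduced_append flip_letter_eq_iff)
    then show ?case
      using Cons.IH[of "u @ [a]"] Cons.prems by simp
  qed simp
  then show "reduced (u @ v) \<Longrightarrow> fg_mult u v = u @ v"
    by (simp add: fg_mult_def)
qed

lemma fg_mult_Nil_gen [simp]: "fg_mult [] (gen y) = gen y"
  and fg_mult_Nil_gen_inv [simp]: "fg_mult [] (gen_inv y) = gen_inv y"
  by (simp_all add: fg_mult_def gen_def gen_inv_def)

lemma fg_mult_singleton:
  "fg_mult u [a] = (if u \<noteq> [] \<and> last u = flip_letter a then butlast u else u @ [a])"
  by (cases u rule: rev_cases) (simp_all add: fg_mult_def)

lemma fg_mult_fg_inv_common_prefix:
  assumes "reduced s" "reduced t" "s = c @ s1" "t = c @ t1"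
    and "s1 = [] \<or> t1 = [] \<or> hd s1 \<noteq> hd t1"
  shows "fg_mult (fg_inv s) t = fg_inv s1 @ t1"
proof -
  have "reduced s1" "reduced t1"
    using assms reduced_append by blast+
  moreover have "s1 \<noteq> [] \<Longrightarrow> last (fg_inv s1) = flip_letter (hd s1)"
    by (simp add: fg_inv_def last_rev last_map hd_map)
  ultimately have "reduced (fg_inv s1 @ t1)"
    using assms(5) reduced_fg_inv by (cases "s1 = []") (auto simp: reduced_append)
  then show ?thesis
    using assms fg_mult_cancel[of "fg_inv s1" c t1] by (simp add: fg_inv_append fg_mult_reduced_append)
qed

definition prefix_closed :: "'a list set \<Rightarrow> bool" where
  "prefix_closed X \<longleftrightarrow> (\<forall>w\<in>X. \<forall>k. take k w \<in> X)"

text \<open>The geodesic from \<open>s = c s\<^sub>1\<close> to \<open>t = c t\<^sub>1\<close> runs through prefixes of \<open>s\<close> down to \<open>c\<close>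
  and then through prefixes of \<open>t\<close>.\<close>

lemma fg_mult_geodesic_prefix:
  assumes "reduced s" "reduced t"
  obtains m where "fg_mult s (take k (fg_mult (fg_inv s) t)) = take m s"
    | m where "fg_mult s (take k (fg_mult (fg_inv s) t)) = take m t"
proof -
  obtain c s1 t1 where st: "s = c @ s1" "t = c @ t1" and d: "s1 = [] \<or> t1 = [] \<or> hd s1 \<noteq> hd t1"
    using longest_common_prefix by blast
  have st_inv: "fg_mult (fg_inv s) t = fg_inv s1 @ t1"
    using fg_mult_fg_inv_common_prefix[OF assms st d] .
  show thesis
  proof (cases "k \<le> length s1")
    case True
    then obtain a b where ab: "s1 = a @ b" "length b = k"
      by (metis append_take_drop_id diff_diff_cancel length_drop)
    then have "fg_mult s (take k (fg_mult (fg_inv s) t)) = fg_mult ((c @ a) @ fg_inv (fg_inv b)) (fg_inv b @ [])"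
      using st st_inv by (simp add: fg_inv_append)
    also have "\<dots> = take (length c + length a) s"
      using st ab by (simp only: fg_mult_cancel fg_mult_Nil_right) simp
    finally show thesis by (rule that(1))
  next
    case False
    let ?t' = "c @ take (k - length s1) t1"
    have "?t' = take (length c + (k - length s1)) t"
      using st by simp
    then have "reduced ?t'"
      using assms(2) reduced_take by metis
    have "fg_mult s (take k (fg_mult (fg_inv s) t)) = fg_mult (c @ fg_inv (fg_inv s1)) (fg_inv s1 @ take (k - length s1) t1)"
      using st st_inv False by simp
    also have "\<dots> = ?t'"
      using \<open>reduced ?t'\<close> by (simp only: fg_mult_cancel fg_mult_reduced_append)
    finally show thesis
      using \<open>?t' = _\<close> that(2) by metis
  qed
qed

lemma convex_fg_iff_prefix_closed:
  assumes "X \<subseteq> FG" "[] \<in> X"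
  shows "convex_fg X \<longleftrightarrow> prefix_closed X"
proof
  assume convex: "convex_fg X"
  show "prefix_closed X"
    unfolding prefix_closed_def
  proof (intro ballI allI)
    fix w k assume "w \<in> X"
    then have "reduced w"
      using assms(1) by (auto simp: FG_def)
    then have "fg_mult [] (take k (fg_mult (fg_inv []) w)) = take k w"
      by (simp add: fg_mult_reduced_append reduced_take)
    then show "take k w \<in> X"
      using convex \<open>w \<in> X\<close> assms(2) unfolding convex_fg_def
      by (metis nat_le_linear take_all)
  qed
next
  assume "prefix_closed X"
  then show "convex_fg X"
    unfolding convex_fg_def
    by (metis assms(1) FG_def fg_mult_geodesic_prefix mem_Collect_eq prefix_closed_def subsetD)
qed


section \<open>Elements of \<open>\<Omega>\<^sub>A\<^sup>\<tau>\<close>\<close>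

abbreviation Gamma_point :: "('g \<Rightarrow> 'g \<Rightarrow> bool) \<Rightarrow> 'g \<Rightarrow> 'g option \<times> ('g \<Rightarrow> bool)" where
  "Gamma_point A j \<equiv> (Some j, col A j)"

lemma
  assumes "\<xi> \<in> OmegaTau A"
  shows OmegaTau_subset_FG: "\<xi> \<subseteq> FG"
    and OmegaTau_Nil: "[] \<in> \<xi>"
    and OmegaTau_prefix_closed: "prefix_closed \<xi>"
    and OmegaTau_successor_unique:
      "\<omega> \<in> \<xi> \<Longrightarrow> fg_mult \<omega> (gen y1) \<in> \<xi> \<Longrightarrow> fg_mult \<omega> (gen y2) \<in> \<xi> \<Longrightarrow> y1 = y2"
    and OmegaTau_gen_inv_iff:
      "\<omega> \<in> \<xi> \<Longrightarrow> fg_mult \<omega> (gen y) \<in> \<xi> \<Longrightarrow> fg_mult \<omega> (gen_inv x) \<in> \<xi> \<longleftrightarrow> A x y"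
  using assms unfolding OmegaTau_def fg_unit_def by (auto simp: convex_fg_iff_prefix_closed)

lemma OmegaTau_take: "\<xi> \<in> OmegaTau A \<Longrightarrow> w \<in> \<xi> \<Longrightarrow> take k w \<in> \<xi>"
  using OmegaTau_prefix_closed prefix_closed_def by blast

lemma OmegaTau_reduced: "\<xi> \<in> OmegaTau A \<Longrightarrow> w \<in> \<xi> \<Longrightarrow> reduced w"
  using OmegaTau_subset_FG FG_def by blast

lemma sigma1_eq_Some_iff:
  assumes "\<xi> \<in> OmegaTau A"
  shows "sigma1 \<xi> = Some x \<longleftrightarrow> gen x \<in> \<xi>"
proof -
  have "gen y \<in> \<xi> \<Longrightarrow> gen z \<in> \<xi> \<Longrightarrow> y = z" for y z
    using OmegaTau_successor_unique[OF assms OmegaTau_Nil[OF assms]] by simp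
  then have "gen y \<in> \<xi> \<Longrightarrow> (THE x. gen x \<in> \<xi>) = y" for y
    by blast
  then show ?thesis
    unfolding sigma1_def by auto
qed

lemma phiA_eq_if_gen_mem:
  assumes "\<xi> \<in> OmegaTau A" "gen x \<in> \<xi>"
  shows "phiA \<xi> = Gamma_point A x"
proof -
  have "Rxi \<xi> = col A x"
    using OmegaTau_gen_inv_iff[OF assms(1) OmegaTau_Nil[OF assms(1)], of x] assms(2)
    by (auto simp: Rxi_def col_def)
  then show ?thesis
    using assms sigma1_eq_Some_iff[OF assms(1)] by (simp add: phiA_def)
qed

text \<open>The first positive letter \<open>y\<close> of a word would follow an inverse letter \<open>x\<inverse>\<close>, and the vertex
  between them would have the two successors \<open>x\<close> (back along the word) and \<open>y\<close>.\<close>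

lemma OmegaTau_no_gen_imp_inverse_letters:
  assumes "\<xi> \<in> OmegaTau A" "\<forall>x. gen x \<notin> \<xi>" "w \<in> \<xi>"
  shows "list_all (\<lambda>l. \<not> snd l) w"
  using assms(3)
proof (induction w rule: rev_induct)
  case (snoc a u)
  have "u \<in> \<xi>"
    using OmegaTau_take[OF assms(1) snoc.prems, of "length u"] by simp
  then have u: "list_all (\<lambda>l. \<not> snd l) u"
    by (rule snoc.IH)
  have "\<not> snd a"
  proof
    assume "snd a"
    then obtain y where a: "a = (y, True)"
      by (metis prod.collapse)
    show False
    proof (cases u rule: rev_cases)
      case Nil
      then show False
        using snoc.prems assms(2) a by (simp add: gen_def)
    next
      case (snoc v b)
      then have "\<not> snd b"
        using u by simp
      then obtain x where b: "b = (x, False)"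
        by (cases b) auto
      have "a \<noteq> flip_letter b"
        using OmegaTau_reduced[OF assms(1) \<open>u @ [a] \<in> \<xi>\<close>] snoc by (simp add: reduced_append)
      then have "x \<noteq> y"
        using a b by (simp add: flip_letter_def)
      have "fg_mult u (gen y) \<in> \<xi>" "fg_mult u (gen x) \<in> \<xi>"
        using \<open>u @ [a] \<in> \<xi>\<close> OmegaTau_take[OF assms(1) \<open>u \<in> \<xi>\<close>, of "length v"] snoc a b \<open>x \<noteq> y\<close>
        by (simp_all add: gen_def fg_mult_singleton flip_letter_def)
      then show False
        using OmegaTau_successor_unique[OF assms(1) \<open>u \<in> \<xi>\<close>] \<open>x \<noteq> y\<close> by blast
    qed
  qed
  then show ?case
    using u by simp
qed simp

lemma fg_unbounded_imp_gen_mem: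
  assumes "\<xi> \<in> OmegaTau A" "fg_unbounded \<xi>"
  obtains x where "gen x \<in> \<xi>"
proof (rule ccontr)
  assume "\<not> thesis"
  then have "\<forall>x. gen x \<notin> \<xi>"
    using that by blast
  have "fg_le s []" if "s \<in> \<xi>" for s
  proof -
    have "list_all snd (fg_inv s)"
      using OmegaTau_no_gen_imp_inverse_letters[OF assms(1) \<open>\<forall>x. gen x \<notin> \<xi>\<close> that]
      by (simp add: fg_inv_def list_all_iff flip_letter_def)
    then show ?thesis
      using reduced_fg_inv[OF OmegaTau_reduced[OF assms(1) that]]
      by (simp add: fg_le_def FGplus_def FG_def)
  qed
  moreover have "[] \<in> FG"
    by (simp add: FG_def)
  ultimately show False
    using assms(2) unfolding fg_unbounded_def by blast
qed

lemma phiA_eq_bottom_iff: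
  assumes "\<xi> \<in> OmegaTau A"
  shows "phiA \<xi> = (None, \<lambda>_. False) \<longleftrightarrow> \<xi> = {[]}"
proof
  assume "phiA \<xi> = (None, \<lambda>_. False)"
  then have "gen x \<notin> \<xi>" "gen_inv x \<notin> \<xi>" for x
    by (auto simp: phiA_def sigma1_def Rxi_def split: if_splits dest: fun_cong)
  then have "[a] \<notin> \<xi>" for a
    by (cases a) (metis (full_types) gen_def gen_inv_def)
  then have "w = []" if "w \<in> \<xi>" for w
    using OmegaTau_take[OF assms that, of 1] by (cases w) auto
  then show "\<xi> = {[]}"
    using OmegaTau_Nil[OF assms] by blast
qed (auto simp: phiA_def sigma1_def Rxi_def gen_def gen_inv_def)


section \<open>An unbounded element over every generator\<close>

definition ray :: "('g \<Rightarrow> 'g) \<Rightarrow> 'g \<Rightarrow> nat \<Rightarrow> 'g word" where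
  "ray nx j n = map (\<lambda>k. ((nx ^^ k) j, True)) [0..<n]"

definition inv_word :: "'g list \<Rightarrow> 'g word" where
  "inv_word xs = map (\<lambda>x. (x, False)) xs"

fun inv_chain :: "('g \<Rightarrow> 'g \<Rightarrow> bool) \<Rightarrow> 'g \<Rightarrow> 'g list \<Rightarrow> bool" where
  "inv_chain A y [] = True"
| "inv_chain A y (x # xs) = (A x y \<and> inv_chain A x xs)"

text \<open>For a choice of successors \<open>A i (nx i)\<close>, the ray \<open>j, nx j, nx\<^sup>2 j, \<dots>\<close> together with every
  \<open>A\<close>-admissible descent along inverse letters; the condition on \<open>hd xs\<close> rules out
  backtracking along the ray.\<close>

definition ray_element :: "('g \<Rightarrow> 'g \<Rightarrow> bool) \<Rightarrow> ('g \<Rightarrow> 'g) \<Rightarrow> 'g \<Rightarrow> 'g word set" where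
  "ray_element A nx j = {ray nx j n @ inv_word xs | n xs. inv_chain A ((nx ^^ n) j) xs
      \<and> (n = 0 \<or> xs = [] \<or> hd xs \<noteq> (nx ^^ (n - 1)) j)}"

lemma ray_Suc: "ray nx j (Suc n) = ray nx j n @ [((nx ^^ n) j, True)]"
  by (simp add: ray_def)

lemma length_ray [simp]: "length (ray nx j n) = n"
  by (simp add: ray_def)

lemma ray_0 [simp]: "ray nx j 0 = []"
  by (simp add: ray_def)

lemma ray_eq_Nil_iff [simp]: "ray nx j n = [] \<longleftrightarrow> n = 0"
  by (simp add: ray_def)

lemma take_ray: "k \<le> n \<Longrightarrow> take k (ray nx j n) = ray nx j k"
  by (simp add: ray_def take_map)

lemma last_ray: "n > 0 \<Longrightarrow> last (ray nx j n) = ((nx ^^ (n - 1)) j, True)"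
  by (cases n) (auto simp: ray_Suc)

lemma list_all_snd_ray: "list_all snd (ray nx j n)"
  by (simp add: ray_def list_all_iff)

lemma inv_word_Nil [simp]: "inv_word [] = []"
  by (simp add: inv_word_def)

lemma last_inv_word: "xs \<noteq> [] \<Longrightarrow> last (ray nx j n @ inv_word xs) = (last xs, False)"
  by (simp add: inv_word_def last_map)

lemma ray_append_inv_word_eq_iff [simp]:
  "ray nx j n @ inv_word xs = ray nx j m @ inv_word ys \<longleftrightarrow> n = m \<and> xs = ys"
proof
  assume eq: "ray nx j n @ inv_word xs = ray nx j m @ inv_word ys"
  have "filter snd (ray nx j k @ inv_word zs) = ray nx j k" for k zs
    using list_all_snd_ray[of nx j k] by (simp add: inv_word_def list_all_iff filter_id_conv)
  then have "ray nx j n = ray nx j m"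
    using arg_cong[OF eq, of "filter snd"] by simp
  then have "n = m"
    using length_ray by metis
  then show "n = m \<and> xs = ys"
    using eq by (simp add: inv_word_def inj_map_eq_map inj_on_def)
qed simp

lemma ray_eq_ray_append_inv_word_iff [simp]:
  "ray nx j n = ray nx j m @ inv_word ys \<longleftrightarrow> n = m \<and> ys = []"
  using ray_append_inv_word_eq_iff[of nx j n "[]" m ys] by auto

lemma ray_eq_ray_iff [simp]: "ray nx j n = ray nx j m \<longleftrightarrow> n = m"
  using ray_append_inv_word_eq_iff[of nx j n "[]" m "[]"] by simp

lemma inv_chain_take: "inv_chain A y xs \<Longrightarrow> inv_chain A y (take k xs)"
  by (induction xs arbitrary: y k) (auto simp: take_Cons split: nat.splits)

lemma inv_chain_snoc: "inv_chain A y (xs @ [x]) \<longleftrightarrow> inv_chain A y xs \<and> A x (last (y # xs))"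
  by (induction xs arbitrary: y) auto

context
  fixes A :: "'g \<Rightarrow> 'g \<Rightarrow> bool" and nx :: "'g \<Rightarrow> 'g" and j :: 'g
begin

lemma ray_append_inv_word_mem_iff:
  "ray nx j n @ inv_word xs \<in> ray_element A nx j \<longleftrightarrow>
     inv_chain A ((nx ^^ n) j) xs \<and> (n = 0 \<or> xs = [] \<or> hd xs \<noteq> (nx ^^ (n - 1)) j)"
  unfolding ray_element_def by auto

lemma ray_element_cases:
  assumes "w \<in> ray_element A nx j"
  obtains n xs where "w = ray nx j n @ inv_word xs" "inv_chain A ((nx ^^ n) j) xs"
    "n = 0 \<or> xs = [] \<or> hd xs \<noteq> (nx ^^ (n - 1)) j"
  using assms unfolding ray_element_def by blast

lemma ray_mem_ray_element: "ray nx j n \<in> ray_element A nx j"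
  using ray_append_inv_word_mem_iff[of n "[]"] by simp

lemma ray_element_subset_FG: "ray_element A nx j \<subseteq> FG"
proof
  fix w assume "w \<in> ray_element A nx j"
  then obtain n xs where w: "w = ray nx j n @ inv_word xs"
    and nb: "n = 0 \<or> xs = [] \<or> hd xs \<noteq> (nx ^^ (n - 1)) j"
    by (rule ray_element_cases)
  have "n = 0 \<or> xs = [] \<or> hd (inv_word xs) \<noteq> flip_letter (last (ray nx j n))"
    using nb by (auto simp: last_ray inv_word_def flip_letter_def hd_map)
  moreover have "list_all (\<lambda>l. \<not> snd l) (inv_word xs)"
    by (simp add: inv_word_def list_all_iff)
  ultimately show "w \<in> FG"
    using w list_all_snd_ray[of nx j n] reduced_if_list_all[of True] reduced_if_list_all[of False]
    by (auto simp: FG_def reduced_append inv_word_def)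
qed

lemma ray_element_prefix_closed: "prefix_closed (ray_element A nx j)"
  unfolding prefix_closed_def
proof (intro ballI allI)
  fix w k assume "w \<in> ray_element A nx j"
  then obtain n xs where w: "w = ray nx j n @ inv_word xs" and ch: "inv_chain A ((nx ^^ n) j) xs"
    and nb: "n = 0 \<or> xs = [] \<or> hd xs \<noteq> (nx ^^ (n - 1)) j"
    by (rule ray_element_cases)
  show "take k w \<in> ray_element A nx j"
  proof (cases "k \<le> n")
    case True
    then show ?thesis
      using w ray_mem_ray_element by (simp add: take_ray)
  next
    case False
    have "take k w = ray nx j n @ inv_word (take (k - n) xs)"
      using w False by (simp add: inv_word_def take_map)
    moreover have "take (k - n) xs = [] \<or> hd (take (k - n) xs) = hd xs"
      by (cases xs; cases "k - n") auto
    ultimately show ?thesis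
      using ray_append_inv_word_mem_iff inv_chain_take[OF ch] nb by auto
  qed
qed

lemma Nil_mem_ray_element: "[] \<in> ray_element A nx j"
  using ray_mem_ray_element[of 0] by (simp add: ray_def)

lemma ray_element_successor:
  assumes "w \<in> ray_element A nx j" "fg_mult w (gen y) \<in> ray_element A nx j"
  shows "(\<exists>n. w = ray nx j n \<and> y = (nx ^^ n) j) \<or>
         (\<exists>n xs. w = ray nx j n @ inv_word xs \<and> xs \<noteq> [] \<and> y = last xs)"
proof -
  obtain n xs where w: "w = ray nx j n @ inv_word xs"
    using assms(1) by (rule ray_element_cases)
  show ?thesis
  proof (cases "w \<noteq> [] \<and> last w = (y, False)")
    case True
    then have "xs \<noteq> []"
      using w last_ray[of n nx j] by (cases "xs = []"; cases "n = 0") auto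
    then show ?thesis
      using True w last_inv_word by fastforce
  next
    case False
    then have "w @ [(y, True)] \<in> ray_element A nx j"
      using assms(2) by (auto simp: fg_mult_singleton gen_def flip_letter_def)
    then obtain m ys where wy: "w @ [(y, True)] = ray nx j m @ inv_word ys"
      by (rule ray_element_cases)
    then have "ys = []"
      using last_inv_word[of ys nx j m] by (metis last_snoc prod.inject)
    then obtain m' where "m = Suc m'"
      using wy by (cases m) auto
    then show ?thesis
      using wy \<open>ys = []\<close> by (auto simp: ray_Suc)
  qed
qed

lemma ray_element_successor_unique:
  assumes "w \<in> ray_element A nx j"
    and "fg_mult w (gen y1) \<in> ray_element A nx j" "fg_mult w (gen y2) \<in> ray_element A nx j"
  shows "y1 = y2"
  using ray_element_successor[OF assms(1,2)] ray_element_successor[OF assms(1,3)]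
  by (elim disjE exE conjE) (auto dest: sym)

lemma ray_element_gen_inv_iff:
  assumes A_nx: "\<And>i. A i (nx i)"
    and w: "w \<in> ray_element A nx j" and wy: "fg_mult w (gen y) \<in> ray_element A nx j"
  shows "fg_mult w (gen_inv x) \<in> ray_element A nx j \<longleftrightarrow> A x y"
  using ray_element_successor[OF w wy]
proof (elim disjE exE conjE)
  fix n assume wn: "w = ray nx j n" and yn: "y = (nx ^^ n) j"
  show ?thesis
  proof (cases "n > 0 \<and> x = (nx ^^ (n - 1)) j")
    case True
    then obtain m where "n = Suc m"
      by (cases n) auto
    then have "fg_mult w (gen_inv x) = ray nx j m" and "A x y"
      using wn yn True A_nx by (simp_all add: fg_mult_singleton gen_inv_def ray_Suc flip_letter_def)
    then show ?thesis
      using ray_mem_ray_element by simp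
  next
    case False
    then have "fg_mult w (gen_inv x) = ray nx j n @ inv_word [x]"
      using wn last_ray[of n nx j] by (auto simp: fg_mult_singleton gen_inv_def flip_letter_def inv_word_def)
    then show ?thesis
      using ray_append_inv_word_mem_iff[of n "[x]"] False yn by auto
  qed
next
  fix n xs assume wn: "w = ray nx j n @ inv_word xs" and "xs \<noteq> []" and yl: "y = last xs"
  then have "fg_mult w (gen_inv x) = ray nx j n @ inv_word (xs @ [x])"
    using last_inv_word[of xs nx j n] by (auto simp: fg_mult_singleton gen_inv_def flip_letter_def inv_word_def)
  moreover have "inv_chain A ((nx ^^ n) j) xs" "n = 0 \<or> hd xs \<noteq> (nx ^^ (n - 1)) j"
    using w wn \<open>xs \<noteq> []\<close> ray_append_inv_word_mem_iff by blast+
  ultimately show ?thesis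
    using ray_append_inv_word_mem_iff[of n "xs @ [x]"] \<open>xs \<noteq> []\<close> yl inv_chain_snoc[of A _ xs x]
    by (auto simp: last_ConsR)
qed

lemma ray_element_in_OmegaTau:
  assumes "\<And>i. A i (nx i)"
  shows "ray_element A nx j \<in> OmegaTau A"
  unfolding OmegaTau_def fg_unit_def mem_Collect_eq
proof (intro conjI ballI allI impI)
  show "convex_fg (ray_element A nx j)"
    using convex_fg_iff_prefix_closed ray_element_subset_FG Nil_mem_ray_element
      ray_element_prefix_closed by blast
next
  fix \<omega> y1 y2
  assume "\<omega> \<in> ray_element A nx j"
    "fg_mult \<omega> (gen y1) \<in> ray_element A nx j \<and> fg_mult \<omega> (gen y2) \<in> ray_element A nx j"
  then show "y1 = y2"
    using ray_element_successor_unique by blast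
qed (use ray_element_subset_FG Nil_mem_ray_element ray_element_gen_inv_iff[OF assms] in blast)+

lemma ray_element_unbounded: "fg_unbounded (ray_element A nx j)"
  unfolding fg_unbounded_def
proof
  assume "\<exists>t\<in>FG. \<forall>s\<in>ray_element A nx j. fg_le s t"
  then obtain t where t: "t \<in> FG" and bound: "\<forall>s\<in>ray_element A nx j. fg_le s t"
    by blast
  let ?s = "ray nx j (Suc (length t))"
  obtain c s1 t1 where st: "?s = c @ s1" "t = c @ t1" and d: "s1 = [] \<or> t1 = [] \<or> hd s1 \<noteq> hd t1"
    using longest_common_prefix by blast
  have "reduced ?s" "reduced t"
    using ray_element_subset_FG ray_mem_ray_element t by (auto simp: FG_def)
  then have "fg_mult (fg_inv ?s) t = fg_inv s1 @ t1"
    using fg_mult_fg_inv_common_prefix st d by blast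
  moreover have "s1 \<noteq> []"
  proof
    assume "s1 = []"
    then have "length ?s = length c"
      using st(1) by simp
    moreover have "length c \<le> length t"
      using st(2) by simp
    ultimately show False
      by simp
  qed
  moreover have "list_all snd s1"
    using list_all_snd_ray st(1) by (metis list_all_append)
  ultimately have "\<not> fg_le ?s t"
    by (cases s1 rule: rev_cases) (auto simp: fg_le_def FGplus_def fg_inv_def flip_letter_def)
  then show False
    using bound ray_mem_ray_element by blast
qed

lemma phiA_ray_element:
  assumes "\<And>i. A i (nx i)"
  shows "phiA (ray_element A nx j) = Gamma_point A j"
proof -
  have "gen j \<in> ray_element A nx j"
    using ray_mem_ray_element[of 1] by (simp add: ray_def gen_def)
  then show ?thesis
    by (rule phiA_eq_if_gen_mem[OF ray_element_in_OmegaTau[OF assms]])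
qed

end

lemma exists_unbounded_over_gen:
  assumes "\<forall>i. \<exists>j. A i j"
  obtains \<xi> where "\<xi> \<in> OmegaTau A" "fg_unbounded \<xi>" "phiA \<xi> = Gamma_point A j"
proof -
  obtain nx where nx: "\<And>i. A i (nx i)"
    using assms by (metis choice)
  show thesis
    by (rule that[OF ray_element_in_OmegaTau[of A nx, OF nx] ray_element_unbounded
          phiA_ray_element[of A nx, OF nx]])
qed


section \<open>The topologies on \<open>2\<^sup>\<F>\<close> and \<open>\<tilde>\<Gamma>\<^sub>A\<close>\<close>

lemma topspace_powtop [simp]: "topspace powtop = UNIV"
  by (simp add: powtop_def topspace_pullback_topology)

lemma continuous_map_eval_bool_fun: "continuous_map euclidean euclidean (\<lambda>f :: 'a \<Rightarrow> bool. f w)"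
  using continuous_map_product_projection[of w UNIV "\<lambda>_. euclidean :: bool topology"]
  by (simp add: euclidean_product_topology)

lemma continuous_map_powtop_mem: "continuous_map powtop euclidean (\<lambda>S. w \<in> S)"
proof -
  have "continuous_map powtop euclidean ((\<lambda>f :: 'a \<Rightarrow> bool. f w) \<circ> (\<lambda>S x. x \<in> S))"
    unfolding powtop_def by (rule continuous_map_pullback[OF continuous_map_eval_bool_fun])
  then show ?thesis
    by (simp add: comp_def)
qed

lemma openin_powtop_mem_in: "openin powtop {S. (w \<in> S) \<in> V}"
  using openin_continuous_map_preimage[OF continuous_map_powtop_mem, of V w] by (simp add: open_discrete)

lemma closedin_powtop_mem_eq: "closedin powtop {S. (w \<in> S) = b}"
proof -
  have "topspace powtop - {S. (w \<in> S) = b} = {S. (w \<in> S) \<in> {\<not> b}}"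
    by auto
  then show ?thesis
    using openin_powtop_mem_in[of w "{\<not> b}"] by (simp add: closedin_def)
qed

lemma openin_powtop_mem: "openin powtop {S. w \<in> S}"
  and openin_powtop_not_mem: "openin powtop {S. w \<notin> S}"
  using openin_powtop_mem_in[of w "{True}"] openin_powtop_mem_in[of w "{False}"] by simp_all

lemma closedin_powtop_mem: "closedin powtop {S. w \<in> S}"
  and closedin_powtop_not_mem: "closedin powtop {S. w \<notin> S}"
  using closedin_powtop_mem_eq[of w True] closedin_powtop_mem_eq[of w False] by simp_all

lemma compact_space_powtop: "compact_space powtop"
proof -
  have "compact_space (euclidean :: bool topology)"
    by (simp add: compact_space_def finite_imp_compact)
  then have "compact_space (product_topology (\<lambda>_. euclidean :: bool topology) (UNIV :: 'a set))"
    by (simp add: compact_space_product_topology)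
  then have "compact_space (euclidean :: ('a \<Rightarrow> bool) topology)"
    by (simp add: euclidean_product_topology)
  moreover have "continuous_map euclidean (powtop :: 'a set topology) Collect"
    unfolding powtop_def
    by (rule continuous_map_pullback') (auto simp: comp_def continuous_map_id[unfolded id_def])
  moreover have "range Collect = (UNIV :: 'a set set)"
    by (metis surj_def Collect_mem_eq)
  ultimately show ?thesis
    unfolding compact_space_def by (metis image_compactin topspace_powtop topspace_euclidean)
qed

lemma closedin_powtop_UNIV [simp]: "closedin powtop UNIV"
  using closedin_topspace[of powtop] by simp

lemma closedin_powtop_const: "closedin powtop {\<xi>. c}"
  by (cases c) auto

lemma closedin_powtop_all:
  assumes "\<And>x. closedin powtop {\<xi>. P x \<xi>}"
  shows "closedin powtop {\<xi>. \<forall>x. P x \<xi>}"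
proof -
  have "closedin powtop (\<Inter>x. {\<xi>. P x \<xi>})"
    using assms by (intro closedin_INT) auto
  moreover have "(\<Inter>x. {\<xi>. P x \<xi>}) = {\<xi>. \<forall>x. P x \<xi>}"
    by auto
  ultimately show ?thesis
    by simp
qed

lemma closedin_powtop_conj:
  "closedin powtop {\<xi>. P \<xi>} \<Longrightarrow> closedin powtop {\<xi>. Q \<xi>} \<Longrightarrow> closedin powtop {\<xi>. P \<xi> \<and> Q \<xi>}"
  using closedin_Int by (simp add: Collect_conj_eq)

lemma closedin_powtop_mem_imp: "closedin powtop {\<xi>. Q \<xi>} \<Longrightarrow> closedin powtop {\<xi>. w \<in> \<xi> \<longrightarrow> Q \<xi>}"
  using closedin_Un[OF closedin_powtop_not_mem[of w]] by (simp add: Collect_imp_eq Collect_neg_eq)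

lemma closedin_powtop_const_imp: "closedin powtop {\<xi>. Q \<xi>} \<Longrightarrow> closedin powtop {\<xi>. c \<longrightarrow> Q \<xi>}"
  by (cases c) auto

lemma closedin_powtop_ball: "(\<And>w. closedin powtop {\<xi>. P w \<xi>}) \<Longrightarrow> closedin powtop {\<xi>. \<forall>w\<in>\<xi>. P w \<xi>}"
  unfolding Ball_def by (intro closedin_powtop_all closedin_powtop_mem_imp)

lemma closedin_powtop_subset: "closedin powtop {\<xi>. \<xi> \<subseteq> B}"
proof -
  have "closedin powtop {\<xi>. \<forall>w. w \<in> \<xi> \<longrightarrow> w \<in> B}"
    by (intro closedin_powtop_all closedin_powtop_mem_imp closedin_powtop_const)
  then show ?thesis
    by (simp only: subset_iff)
qed

text \<open>Every clause defining \<^const>\<open>OmegaTau\<close> is built from the clopen conditions \<open>w \<in> \<xi>\<close> by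
  conjunction, implication and universal quantification.\<close>

lemma closedin_powtop_OmegaTau: "closedin powtop (OmegaTau A)"
  unfolding OmegaTau_def convex_fg_def imp_conjL
  by (intro closedin_powtop_conj closedin_powtop_ball closedin_powtop_all closedin_powtop_mem_imp
      closedin_powtop_const_imp closedin_powtop_const closedin_powtop_subset closedin_powtop_mem
      closedin_powtop_mem_eq)

lemma openin_tildeG_top: "openin tildeG_top U \<longleftrightarrow> None \<notin> U \<or> finite (- U)"
proof -
  have istop: "istopology (\<lambda>U :: 'g option set. None \<notin> U \<or> finite (- U))"
    unfolding istopology_def
  proof (intro conjI ballI allI impI)
    fix K :: "'g option set set"
    assume K: "\<forall>U\<in>K. None \<notin> U \<or> finite (- U)"
    show "None \<notin> \<Union>K \<or> finite (- \<Union>K)"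
      using K by (metis Compl_anti_mono UnionE Union_upper finite_subset)
  qed auto
  show ?thesis
    unfolding tildeG_top_def topology_inverse'[OF istop] ..
qed

lemma topspace_tildeG_top [simp]: "topspace tildeG_top = UNIV"
  by (metis Compl_UNIV_eq finite.emptyI openin_subset openin_tildeG_top subset_antisym top_greatest)

lemma Hausdorff_space_tildeG_top: "Hausdorff_space tildeG_top"
  unfolding Hausdorff_space_def
proof (intro allI impI)
  fix x y :: "'g option"
  assume "x \<in> topspace tildeG_top \<and> y \<in> topspace tildeG_top \<and> x \<noteq> y"
  then have "x \<noteq> y"
    by blast
  then consider "x \<noteq> None" | "y \<noteq> None"
    by metis
  then show "\<exists>U V. openin tildeG_top U \<and> openin tildeG_top V \<and> x \<in> U \<and> y \<in> V \<and> disjnt U V"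
  proof cases
    case 1
    then show ?thesis
      using \<open>x \<noteq> y\<close> by (intro exI[of _ "{x}"] exI[of _ "- {x}"]) (auto simp: openin_tildeG_top disjnt_def)
  next
    case 2
    then show ?thesis
      using \<open>x \<noteq> y\<close> by (intro exI[of _ "- {y}"] exI[of _ "{y}"]) (auto simp: openin_tildeG_top disjnt_def)
  qed
qed

lemma topspace_Gamma_top [simp]: "topspace Gamma_top = UNIV"
  by (simp add: Gamma_top_def)

lemma Hausdorff_space_Gamma_top: "Hausdorff_space Gamma_top"
proof -
  have "Hausdorff_space (euclidean :: bool topology)"
    by (simp add: Hausdorff_space_def disjnt_def) (metis Int_commute Int_insert_left_if0 inf_bot_left
        insertI1 open_discrete singletonD)
  then have "Hausdorff_space (euclidean :: ('g \<Rightarrow> bool) topology)"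
    using Hausdorff_space_product_topology[of "\<lambda>_. euclidean :: bool topology" "UNIV :: 'g set"]
    by (simp add: euclidean_product_topology)
  then show ?thesis
    unfolding Gamma_top_def using Hausdorff_space_prod_topology Hausdorff_space_tildeG_top by blast
qed


section \<open>The map \<open>\<xi> \<mapsto> (\<sigma>(\<xi>)\<^sub>1, R\<^sub>\<xi>(e))\<close>\<close>

lemma sigma1_mem_iff:
  assumes "\<xi> \<in> OmegaTau A"
  shows "sigma1 \<xi> \<in> U \<longleftrightarrow>
    (if None \<in> U then \<forall>x. Some x \<notin> U \<longrightarrow> gen x \<notin> \<xi> else \<exists>x. Some x \<in> U \<and> gen x \<in> \<xi>)"
proof (cases "sigma1 \<xi>")
  case None
  then have "gen x \<notin> \<xi>" for x
    using sigma1_eq_Some_iff[OF assms] by auto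
  then show ?thesis
    using None by auto
next
  case (Some y)
  then have "gen x \<in> \<xi> \<longleftrightarrow> x = y" for x
    using sigma1_eq_Some_iff[OF assms, of x] by auto
  then show ?thesis
    using Some by auto
qed

lemma continuous_map_sigma1:
  fixes A :: "'g \<Rightarrow> 'g \<Rightarrow> bool"
  shows "continuous_map (subtopology powtop (OmegaTau A)) tildeG_top sigma1"
  unfolding continuous_map_def
proof (intro conjI allI impI)
  fix U :: "'g option set"
  assume "openin tildeG_top U"
  define V where "V = (if None \<in> U then (\<Inter>x\<in>{x. Some x \<notin> U}. {S. gen x \<notin> S}) \<inter> topspace powtop
    else (\<Union>x\<in>{x. Some x \<in> U}. {S. gen x \<in> S}))"
  have "openin powtop V"
  proof (cases "None \<in> U")
    case True
    then have "finite (Some -` (- U))"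
      using \<open>openin tildeG_top U\<close> by (simp add: openin_tildeG_top finite_vimageI)
    then show ?thesis
      using True openin_INT[of "{x. Some x \<notin> U}" powtop "\<lambda>x. {S. gen x \<notin> S}"]
      by (simp add: V_def vimage_def openin_powtop_not_mem)
  qed (auto simp: V_def intro: openin_powtop_mem)
  moreover have "\<xi> \<in> OmegaTau A \<Longrightarrow> sigma1 \<xi> \<in> U \<longleftrightarrow> \<xi> \<in> V" for \<xi>
    using sigma1_mem_iff[of \<xi> A U] by (simp add: V_def)
  then have "{\<xi> \<in> topspace (subtopology powtop (OmegaTau A)). sigma1 \<xi> \<in> U} = OmegaTau A \<inter> V"
    by auto
  ultimately show "openin (subtopology powtop (OmegaTau A))
      {\<xi> \<in> topspace (subtopology powtop (OmegaTau A)). sigma1 \<xi> \<in> U}"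
    by (auto simp: openin_subtopology)
qed simp

lemma continuous_map_Rxi: "continuous_map powtop euclidean Rxi"
proof -
  have "continuous_map powtop (product_topology (\<lambda>_. euclidean :: bool topology) UNIV) Rxi"
    unfolding continuous_map_componentwise_UNIV Rxi_def by (simp add: continuous_map_powtop_mem)
  then show ?thesis
    by (simp add: euclidean_product_topology)
qed

lemma continuous_map_phiA: "continuous_map (subtopology powtop (OmegaTau A)) Gamma_top phiA"
  unfolding Gamma_top_def continuous_map_pairwise
  using continuous_map_sigma1[of A] continuous_map_from_subtopology[OF continuous_map_Rxi]
  by (simp add: phiA_def comp_def)

lemma OmegaTilde_subset_OmegaTau: "OmegaTilde A \<subseteq> OmegaTau A"
  unfolding OmegaTilde_def using closure_of_subset_topspace by fastforce

lemma continuous_map_phiA_OmegaTilde: "continuous_map (subtopology powtop (OmegaTilde A)) Gamma_top phiA"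
  by (rule continuous_map_from_subtopology_mono[OF continuous_map_phiA OmegaTilde_subset_OmegaTau])

lemma compactin_OmegaTilde: "compactin powtop (OmegaTilde A)"
proof -
  have "closedin (subtopology powtop (OmegaTau A)) (OmegaTilde A)"
    unfolding OmegaTilde_def by simp
  then have "closedin powtop (OmegaTilde A)"
    using closedin_trans_full closedin_powtop_OmegaTau by blast
  then show ?thesis
    using closedin_compact_space compact_space_powtop by blast
qed

lemma phiA_image_OmegaTilde_subset: "phiA ` OmegaTilde A \<subseteq> GammaTilde A"
proof -
  let ?U = "{\<xi> \<in> OmegaTau A. fg_unbounded \<xi>}"
  have "phiA ` ?U \<subseteq> {(Some j, col A j) | j. True}"
  proof
    fix p assume "p \<in> phiA ` ?U"
    then obtain \<xi> where \<xi>: "\<xi> \<in> OmegaTau A" "fg_unbounded \<xi>" and p: "p = phiA \<xi>"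
      by blast
    obtain x where "gen x \<in> \<xi>"
      using fg_unbounded_imp_gen_mem[OF \<xi>] .
    then show "p \<in> {(Some j, col A j) | j. True}"
      using phiA_eq_if_gen_mem[OF \<xi>(1)] p by blast
  qed
  then have "Gamma_top closure_of (phiA ` ?U) \<subseteq> GammaTilde A"
    unfolding GammaTilde_def by (rule closure_of_mono)
  moreover have "phiA ` OmegaTilde A \<subseteq> Gamma_top closure_of (phiA ` ?U)"
    unfolding OmegaTilde_def by (rule continuous_map_image_closure_subset[OF continuous_map_phiA])
  ultimately show ?thesis
    by blast
qed

lemma Gamma_point_in_phiA_image:
  assumes "\<forall>i. \<exists>j. A i j"
  shows "Gamma_point A j \<in> phiA ` OmegaTilde A"
proof -
  obtain \<xi> where "\<xi> \<in> OmegaTau A" "fg_unbounded \<xi>" "phiA \<xi> = Gamma_point A j"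
    using exists_unbounded_over_gen[OF assms] .
  moreover from this have "\<xi> \<in> OmegaTilde A"
    unfolding OmegaTilde_def by (auto intro: closure_of_subset[THEN subsetD])
  ultimately show ?thesis
    by (metis image_eqI)
qed

lemma phiA_image_OmegaTilde:
  assumes "\<forall>i. \<exists>j. A i j"
  shows "phiA ` OmegaTilde A = GammaTilde A"
proof
  show "phiA ` OmegaTilde A \<subseteq> GammaTilde A"
    by (rule phiA_image_OmegaTilde_subset)
  have "compactin (subtopology powtop (OmegaTau A)) (OmegaTilde A)"
    using compactin_OmegaTilde[of A] OmegaTilde_subset_OmegaTau[of A] by (simp add: compactin_subtopology)
  then have "compactin Gamma_top (phiA ` OmegaTilde A)"
    by (rule image_compactin[OF _ continuous_map_phiA])
  then have "closedin Gamma_top (phiA ` OmegaTilde A)"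
    using compactin_imp_closedin Hausdorff_space_Gamma_top by blast
  moreover have "{(Some j, col A j) | j. True} \<subseteq> phiA ` OmegaTilde A"
    using Gamma_point_in_phiA_image[OF assms] by blast
  ultimately show "GammaTilde A \<subseteq> phiA ` OmegaTilde A"
    unfolding GammaTilde_def by (rule closure_of_minimal[rotated])
qed

lemma phiA_image_Omega:
  assumes "\<forall>i. \<exists>j. A i j"
  shows "phiA ` Omega A = Gamma A"
proof -
  have bottom: "phiA \<xi> = (None, \<lambda>_. False) \<longleftrightarrow> \<xi> = {fg_unit}" if "\<xi> \<in> OmegaTilde A" for \<xi>
    using phiA_eq_bottom_iff[of \<xi> A] OmegaTilde_subset_OmegaTau[of A] that by (auto simp: fg_unit_def)
  show ?thesis
    unfolding Omega_def Gamma_def phiA_image_OmegaTilde[OF assms, symmetric]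
  proof (intro equalityI subsetI)
    fix p assume "p \<in> phiA ` (OmegaTilde A - {{fg_unit}})"
    then obtain \<xi> where \<xi>: "\<xi> \<in> OmegaTilde A" "\<xi> \<noteq> {fg_unit}" and "p = phiA \<xi>"
      by blast
    then show "p \<in> phiA ` OmegaTilde A - {(None, \<lambda>_. False)}"
      using bottom[OF \<xi>(1)] by auto
  next
    fix p assume "p \<in> phiA ` OmegaTilde A - {(None, \<lambda>_. False)}"
    then obtain \<xi> where \<xi>: "\<xi> \<in> OmegaTilde A" and "p = phiA \<xi>" "p \<noteq> (None, \<lambda>_. False)"
      by blast
    then show "p \<in> phiA ` (OmegaTilde A - {{fg_unit}})"
      using bottom[OF \<xi>] by auto
  qed
qed


section \<open>Continuous extensions to the closure of an embedded set\<close>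

text \<open>As in \<^const>\<open>hat\<close>, the extension is normalised to vanish off the closure.\<close>

definition continuous_extension ::
    "'p topology \<Rightarrow> ('g \<Rightarrow> 'p) \<Rightarrow> ('g \<Rightarrow> complex) \<Rightarrow> ('p \<Rightarrow> complex) \<Rightarrow> bool" where
  "continuous_extension T e f h \<longleftrightarrow>
     continuous_map (subtopology T (T closure_of range e)) euclidean h
     \<and> (\<forall>j. h (e j) = f j) \<and> (\<forall>p. p \<notin> T closure_of range e \<longrightarrow> h p = 0)"

definition extendable :: "'p topology \<Rightarrow> ('g \<Rightarrow> 'p) \<Rightarrow> ('g \<Rightarrow> complex) set" where
  "extendable T e = {f. \<exists>h. continuous_extension T e f h}"

lemma extendableI: "continuous_extension T e f h \<Longrightarrow> f \<in> extendable T e"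
  unfolding extendable_def by blast

lemma norm_le_on_closure_of:
  fixes h :: "'p \<Rightarrow> 'a :: real_normed_vector"
  assumes h: "continuous_map (subtopology T (T closure_of D)) euclidean h"
    and bound: "\<And>x. x \<in> D \<Longrightarrow> norm (h x) \<le> \<epsilon>" and p: "p \<in> T closure_of D"
  shows "norm (h p) \<le> \<epsilon>"
proof -
  let ?C = "{p \<in> topspace (subtopology T (T closure_of D)). h p \<in> cball 0 \<epsilon>}"
  have "closedin (subtopology T (T closure_of D)) ?C"
    by (rule closedin_continuous_map_preimage[OF h]) (simp add: closed_cball)
  then have closed: "closedin T ?C"
    by (rule closedin_trans_full[OF _ closedin_closure_of])
  have sub: "topspace T \<inter> D \<subseteq> ?C"
    using bound closure_of_subset_Int[of T D] by auto
  have "T closure_of D \<subseteq> ?C"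
    using closure_of_minimal[OF sub closed] closure_of_restrict[of T D] by simp
  then show ?thesis
    using p by auto
qed

lemma continuous_extension_norm_diff_le:
  assumes h: "continuous_extension T e f h" and k: "continuous_extension T e g k"
    and bound: "\<And>x. cmod (f x - g x) \<le> \<epsilon>"
  shows "cmod (h p - k p) \<le> \<epsilon>"
proof (cases "p \<in> T closure_of range e")
  case True
  have "continuous_map (subtopology T (T closure_of range e)) euclidean (\<lambda>p. h p - k p)"
    using h k unfolding continuous_extension_def by (intro continuous_map_diff) auto
  moreover have "cmod (h x - k x) \<le> \<epsilon>" if "x \<in> range e" for x
    using that h k bound by (auto simp: continuous_extension_def)
  ultimately show ?thesis
    by (rule norm_le_on_closure_of[OF _ _ True])
next
  case False
  then have "h p - k p = 0"
    using h k by (simp add: continuous_extension_def)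
  moreover have "0 \<le> \<epsilon>"
    using norm_ge_zero bound by (rule order_trans)
  ultimately show ?thesis
    by simp
qed

lemma continuous_extension_unique:
  assumes "continuous_extension T e f h" "continuous_extension T e f k"
  shows "h = k"
proof
  fix p
  show "h p = k p"
    using continuous_extension_norm_diff_le[OF assms, of 0 p] by simp
qed

lemma continuous_map_if_clopen:
  assumes "closedin X S" "openin X S"
  shows "continuous_map X euclidean (\<lambda>x. if x \<in> S then a else b)"
  unfolding continuous_map_def
proof (intro conjI allI impI)
  fix U
  have "{x \<in> topspace X. (if x \<in> S then a else b) \<in> U} =
      (if a \<in> U then S else {}) \<union> (if b \<in> U then topspace X - S else {})"
    using closedin_subset[OF assms(1)] by auto
  moreover have "openin X (topspace X - S)"
    using assms(1) by (simp add: closedin_def)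
  ultimately show "openin X {x \<in> topspace X. (if x \<in> S then a else b) \<in> U}"
    using assms(2) by auto
qed simp

lemma continuous_extension_indicator:
  assumes "range e \<subseteq> topspace T" "closedin T S" "openin T S"
  shows "continuous_extension T e (\<lambda>j. if e j \<in> S then 1 else 0)
           (\<lambda>p. if p \<in> T closure_of range e \<and> p \<in> S then 1 else 0)"
proof -
  have "continuous_map (subtopology T (T closure_of range e)) euclidean (\<lambda>p. if p \<in> S then 1 else 0 :: complex)"
    using continuous_map_if_clopen[OF assms(2,3)] by (rule continuous_map_from_subtopology)
  then have "continuous_map (subtopology T (T closure_of range e)) euclidean
      (\<lambda>p. if p \<in> T closure_of range e \<and> p \<in> S then 1 else 0 :: complex)"
    by (rule continuous_map_eq) simp
  moreover have "range e \<subseteq> T closure_of range e"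
    using assms(1) closure_of_subset by blast
  ultimately show ?thesis
    unfolding continuous_extension_def by auto
qed

lemma continuous_extension_zero: "continuous_extension T e (\<lambda>_. 0) (\<lambda>_. 0)"
  by (simp add: continuous_extension_def)

lemma continuous_extension_add:
  "continuous_extension T e f h \<Longrightarrow> continuous_extension T e g k \<Longrightarrow>
     continuous_extension T e (\<lambda>x. f x + g x) (\<lambda>p. h p + k p)"
  by (auto simp: continuous_extension_def intro: continuous_map_add)

lemma continuous_extension_mult:
  "continuous_extension T e f h \<Longrightarrow> continuous_extension T e g k \<Longrightarrow>
     continuous_extension T e (\<lambda>x. f x * g x) (\<lambda>p. h p * k p)"
  by (auto simp: continuous_extension_def continuous_map_atin intro: tendsto_mult)

lemma continuous_extension_scale:
  "continuous_extension T e f h \<Longrightarrow> continuous_extension T e (\<lambda>x. c * f x) (\<lambda>p. c * h p)"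
  by (auto simp: continuous_extension_def continuous_map_atin intro: tendsto_mult)

lemma continuous_extension_cnj:
  "continuous_extension T e f h \<Longrightarrow> continuous_extension T e (\<lambda>x. cnj (f x)) (\<lambda>p. cnj (h p))"
  by (auto simp: continuous_extension_def continuous_map_atin intro: tendsto_cnj)

lemma extendable_star_alg:
  assumes "S \<subseteq> extendable T e"
  shows "star_alg S \<subseteq> extendable T e"
proof
  fix f assume "f \<in> star_alg S"
  then show "f \<in> extendable T e"
    unfolding extendable_def
  proof induction
    case (gen f)
    then show ?case
      using assms by (auto simp: extendable_def)
  next
    case zero
    then show ?case
      using continuous_extension_zero by blast
  next
    case (add f g)
    then show ?case
      using continuous_extension_add by blast
  next
    case (smult f c)
    then show ?case
      using continuous_extension_scale by blast
  next
    case (mult f g)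
    then show ?case
      using continuous_extension_mult by blast
  next
    case (conj f)
    then show ?case
      using continuous_extension_cnj by blast
  qed
qed

lemma uniform_limit_of_uniform_approximations:
  fixes f :: "'a \<Rightarrow> 'b :: real_normed_vector"
  assumes "\<And>\<epsilon>. \<epsilon> > 0 \<Longrightarrow> \<exists>g\<in>G. \<forall>x. norm (f x - g x) \<le> \<epsilon>"
  obtains g where "\<And>n. g n \<in> G" "uniform_limit UNIV g f sequentially"
proof -
  have "\<forall>n. \<exists>g. g \<in> G \<and> (\<forall>x. norm (f x - g x) \<le> inverse (real (Suc n)))"
    using assms[of "inverse (real (Suc _))"] by auto
  then obtain g where g: "\<forall>n. g n \<in> G \<and> (\<forall>x. norm (f x - g n x) \<le> inverse (real (Suc n)))"
    by (rule choice[THEN exE])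
  have "uniform_limit UNIV g f sequentially"
    unfolding uniform_limit_sequentially_iff
  proof (intro allI impI)
    fix \<epsilon> :: real assume "\<epsilon> > 0"
    then obtain N where N: "inverse (real (Suc N)) < \<epsilon>"
      using reals_Archimedean by blast
    have "dist (g n x) (f x) < \<epsilon>" if "n \<ge> N" for n x
    proof -
      have "dist (g n x) (f x) \<le> inverse (real (Suc n))"
        using g by (simp add: dist_norm norm_minus_commute)
      also have "\<dots> \<le> inverse (real (Suc N))"
        using that by (simp add: field_simps)
      finally show ?thesis
        using N by simp
    qed
    then show "\<exists>N. \<forall>n\<ge>N. \<forall>x\<in>UNIV. dist (g n x) (f x) < \<epsilon>"
      by blast
  qed
  then show thesis
    using g that by blast
qed

lemma continuous_map_uniform_limit_sequentially:
  fixes h :: "nat \<Rightarrow> 'p \<Rightarrow> 'a :: metric_space"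
  assumes "\<And>n. continuous_map X euclidean (h n)" "uniform_limit UNIV h H sequentially"
  shows "continuous_map X euclidean H"
proof -
  have "continuous_map X Met_TC.mtopology H"
  proof (rule Met_TC.continuous_map_uniform_limit[where F = sequentially and f = h])
    show "\<forall>\<^sub>F n in sequentially. continuous_map X Met_TC.mtopology (h n)"
      using assms(1) by simp
    show "\<forall>\<^sub>F n in sequentially. \<forall>x\<in>topspace X. H x \<in> UNIV \<and> dist (h n x) (H x) < \<epsilon>"
      if "\<epsilon> > 0" for \<epsilon>
    proof -
      have "\<forall>\<^sub>F n in sequentially. \<forall>x. dist (h n x) (H x) < \<epsilon>"
        using assms(2) that unfolding uniform_limit_iff by simp
      then show ?thesis
        by (rule eventually_mono) simp
    qed
  qed simp
  then show ?thesis
    by simp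
qed

text \<open>Extensions of a uniformly Cauchy sequence are uniformly Cauchy, since extending does not
  increase the sup norm.\<close>

lemma continuous_extension_uniform_limit:
  assumes h: "\<And>n. continuous_extension T e (g n) (h n)" and g: "uniform_limit UNIV g f sequentially"
  obtains H where "continuous_extension T e f H"
proof -
  have "uniformly_Cauchy_on UNIV g"
    using g uniformly_convergent_Cauchy uniformly_convergent_on_def by blast
  have "uniformly_Cauchy_on UNIV h"
  proof (rule uniformly_Cauchy_onI)
    fix \<epsilon> :: real assume "\<epsilon> > 0"
    then obtain M where M: "\<And>x m n. m \<ge> M \<Longrightarrow> n \<ge> M \<Longrightarrow> dist (g m x) (g n x) < \<epsilon> / 2"
      using \<open>uniformly_Cauchy_on UNIV g\<close> unfolding uniformly_Cauchy_on_def by (meson half_gt_zero UNIV_I)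
    have "dist (h m p) (h n p) < \<epsilon>" if "m \<ge> M" "n \<ge> M" for m n p
      using continuous_extension_norm_diff_le[OF h[of m] h[of n], of "\<epsilon> / 2" p] M[OF that] \<open>\<epsilon> > 0\<close>
      by (simp add: dist_norm less_imp_le)
    then show "\<exists>M. \<forall>p\<in>UNIV. \<forall>m\<ge>M. \<forall>n\<ge>M. dist (h m p) (h n p) < \<epsilon>"
      by blast
  qed
  then obtain H where H: "uniform_limit UNIV h H sequentially"
    unfolding uniformly_convergent_eq_Cauchy[symmetric] uniformly_convergent_on_def by blast
  then have h_lim: "(\<lambda>n. h n p) \<longlonglongrightarrow> H p" for p
    by (rule tendsto_uniform_limitI) simp
  have "continuous_extension T e f H"
    unfolding continuous_extension_def
  proof (intro conjI allI impI)
    show "continuous_map (subtopology T (T closure_of range e)) euclidean H"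
      using h H by (auto simp: continuous_extension_def intro: continuous_map_uniform_limit_sequentially)
  next
    fix j
    have "(\<lambda>n. h n (e j)) \<longlonglongrightarrow> f j"
      using tendsto_uniform_limitI[OF g, of j] h by (simp add: continuous_extension_def)
    then show "H (e j) = f j"
      using h_lim LIMSEQ_unique by blast
  next
    fix p assume "p \<notin> T closure_of range e"
    then have "(\<lambda>n. h n p) \<longlonglongrightarrow> 0"
      using h by (simp add: continuous_extension_def)
    then show "H p = 0"
      using h_lim LIMSEQ_unique by blast
  qed
  then show thesis
    by (rule that)
qed

lemma extendable_uniform_limit:
  assumes "\<And>\<epsilon>. \<epsilon> > 0 \<Longrightarrow> \<exists>g\<in>extendable T e. \<forall>x. cmod (f x - g x) \<le> \<epsilon>"
  shows "f \<in> extendable T e"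
proof -
  obtain g where "\<And>n. g n \<in> extendable T e" and g: "uniform_limit UNIV g f sequentially"
    using uniform_limit_of_uniform_approximations[OF assms] by blast
  then have "\<forall>n. \<exists>h. continuous_extension T e (g n) h"
    by (simp add: extendable_def)
  then obtain h where "\<And>n. continuous_extension T e (g n) (h n)"
    using choice[of "\<lambda>n h. continuous_extension T e (g n) h"] by blast
  then show ?thesis
    using continuous_extension_uniform_limit[OF _ g] extendableI by metis
qed

lemma extendable_cstar_gen:
  assumes "S \<subseteq> extendable T e"
  shows "cstar_gen S \<subseteq> extendable T e"
proof
  fix f assume "f \<in> cstar_gen S"
  then show "f \<in> extendable T e"
    using extendable_star_alg[OF assms] unfolding cstar_gen_def
    by (intro extendable_uniform_limit) blast
qed


section \<open>Isometric *-homomorphisms and generated C*-algebras\<close>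

lemma star_alg_mono:
  assumes "S \<subseteq> S'"
  shows "star_alg S \<subseteq> star_alg S'"
proof
  fix f assume "f \<in> star_alg S"
  then show "f \<in> star_alg S'"
    by induction (use assms in \<open>auto intro: star_alg.intros\<close>)
qed

lemma star_alg_subset_cstar_gen: "star_alg S \<subseteq> cstar_gen S"
  unfolding cstar_gen_def by force

lemma cstar_gen_mono: "S \<subseteq> S' \<Longrightarrow> cstar_gen S \<subseteq> cstar_gen S'"
  unfolding cstar_gen_def using star_alg_mono by blast

text \<open>Contractivity together with the section \<open>\<iota>\<close> makes \<open>\<Psi>\<close> isometric for the sup norm.\<close>

locale isometric_star_hom =
  fixes E :: "('a \<Rightarrow> complex) set" and \<Psi> :: "('a \<Rightarrow> complex) \<Rightarrow> 'b \<Rightarrow> complex" and \<iota> :: "'a \<Rightarrow> 'b"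
  assumes cstar_gen_subset: "cstar_gen E \<subseteq> E"
    and hom_add: "f \<in> E \<Longrightarrow> g \<in> E \<Longrightarrow> \<Psi> (\<lambda>x. f x + g x) = (\<lambda>y. \<Psi> f y + \<Psi> g y)"
    and hom_scale: "f \<in> E \<Longrightarrow> \<Psi> (\<lambda>x. c * f x) = (\<lambda>y. c * \<Psi> f y)"
    and hom_mult: "f \<in> E \<Longrightarrow> g \<in> E \<Longrightarrow> \<Psi> (\<lambda>x. f x * g x) = (\<lambda>y. \<Psi> f y * \<Psi> g y)"
    and hom_cnj: "f \<in> E \<Longrightarrow> \<Psi> (\<lambda>x. cnj (f x)) = (\<lambda>y. cnj (\<Psi> f y))"
    and contractive: "f \<in> E \<Longrightarrow> g \<in> E \<Longrightarrow> (\<And>x. cmod (f x - g x) \<le> \<epsilon>) \<Longrightarrow> cmod (\<Psi> f y - \<Psi> g y) \<le> \<epsilon>"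
    and eval_iota: "f \<in> E \<Longrightarrow> \<Psi> f (\<iota> x) = f x"
begin

lemma cstar_gen_subset_E: "S \<subseteq> E \<Longrightarrow> cstar_gen S \<subseteq> E"
  using cstar_gen_mono cstar_gen_subset by blast

lemma star_alg_subset_E: "S \<subseteq> E \<Longrightarrow> star_alg S \<subseteq> E"
  using cstar_gen_subset_E star_alg_subset_cstar_gen by blast

lemma hom_zero: "\<Psi> (\<lambda>_. 0) = (\<lambda>_. 0)"
proof -
  have "(\<lambda>_. 0) \<in> E"
    using star_alg_subset_E[of E] star_alg.zero by blast
  then show ?thesis
    using hom_scale[of "\<lambda>_. 0" 0] by simp
qed

lemma inj_on: "inj_on \<Psi> E"
  by (rule inj_onI) (metis eval_iota ext)

lemma hom_mem_star_alg_image: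
  assumes "S \<subseteq> E" "f \<in> star_alg S"
  shows "\<Psi> f \<in> star_alg (\<Psi> ` S)"
  using assms(2)
proof induction
  case (add f g)
  then show ?case
    using star_alg_subset_E[OF assms(1)] by (simp add: hom_add star_alg.add subset_iff)
next
  case (smult f c)
  then show ?case
    using star_alg_subset_E[OF assms(1)] by (simp add: hom_scale star_alg.smult subset_iff)
next
  case (mult f g)
  then show ?case
    using star_alg_subset_E[OF assms(1)] by (simp add: hom_mult star_alg.mult subset_iff)
next
  case (conj f)
  then show ?case
    using star_alg_subset_E[OF assms(1)] by (simp add: hom_cnj star_alg.conj subset_iff)
qed (auto simp: hom_zero intro: star_alg.intros)

lemma star_alg_image_subset:
  assumes "S \<subseteq> E"
  shows "star_alg (\<Psi> ` S) \<subseteq> \<Psi> ` star_alg S"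
proof
  fix F assume "F \<in> star_alg (\<Psi> ` S)"
  then show "F \<in> \<Psi> ` star_alg S"
  proof induction
    case zero
    show ?case
      using hom_zero star_alg.zero by (metis image_eqI)
  next
    case (add F G)
    then obtain f g where "f \<in> star_alg S" "g \<in> star_alg S" "F = \<Psi> f" "G = \<Psi> g"
      by blast
    then show ?case
      using star_alg_subset_E[OF assms] hom_add[of f g] star_alg.add[of f S g]
      by (intro rev_image_eqI[of "\<lambda>x. f x + g x"]) (auto simp: subset_iff)
  next
    case (smult F c)
    then obtain f where "f \<in> star_alg S" "F = \<Psi> f"
      by blast
    then show ?case
      using star_alg_subset_E[OF assms] hom_scale[of f c] star_alg.smult[of f S c]
      by (intro rev_image_eqI[of "\<lambda>x. c * f x"]) (auto simp: subset_iff)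
  next
    case (mult F G)
    then obtain f g where "f \<in> star_alg S" "g \<in> star_alg S" "F = \<Psi> f" "G = \<Psi> g"
      by blast
    then show ?case
      using star_alg_subset_E[OF assms] hom_mult[of f g] star_alg.mult[of f S g]
      by (intro rev_image_eqI[of "\<lambda>x. f x * g x"]) (auto simp: subset_iff)
  next
    case (conj F)
    then obtain f where "f \<in> star_alg S" "F = \<Psi> f"
      by blast
    then show ?case
      using star_alg_subset_E[OF assms] hom_cnj[of f] star_alg.conj[of f S]
      by (intro rev_image_eqI[of "\<lambda>x. cnj (f x)"]) (auto simp: subset_iff)
  qed (auto intro: star_alg.gen)
qed

lemma image_cstar_gen_subset:
  assumes "S \<subseteq> E"
  shows "\<Psi> ` cstar_gen S \<subseteq> cstar_gen (\<Psi> ` S)"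
proof
  fix F assume "F \<in> \<Psi> ` cstar_gen S"
  then obtain f where f: "f \<in> cstar_gen S" and F: "F = \<Psi> f"
    by blast
  show "F \<in> cstar_gen (\<Psi> ` S)"
    unfolding cstar_gen_def
  proof (intro CollectI allI impI)
    fix \<epsilon> :: real assume "\<epsilon> > 0"
    then obtain g where g: "g \<in> star_alg S" and approx: "\<And>x. cmod (f x - g x) \<le> \<epsilon>"
      using f unfolding cstar_gen_def by blast
    have "f \<in> E" "g \<in> E"
      using f g cstar_gen_subset_E[OF assms] star_alg_subset_E[OF assms] by auto
    then have "\<forall>y. cmod (F y - \<Psi> g y) \<le> \<epsilon>"
      using contractive approx F by blast
    moreover have "\<Psi> g \<in> star_alg (\<Psi> ` S)"
      using hom_mem_star_alg_image[OF assms g] .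
    ultimately show "\<exists>G\<in>star_alg (\<Psi> ` S). \<forall>y. cmod (F y - G y) \<le> \<epsilon>"
      by blast
  qed
qed

lemma cstar_gen_image_approx:
  assumes "S \<subseteq> E" "F \<in> cstar_gen (\<Psi> ` S)" "\<epsilon> > 0"
  shows "\<exists>g\<in>star_alg S. (\<forall>x. cmod (F (\<iota> x) - g x) \<le> \<epsilon>) \<and> (\<forall>y. cmod (F y - \<Psi> g y) \<le> \<epsilon>)"
proof -
  obtain G where "G \<in> star_alg (\<Psi> ` S)" and FG: "\<forall>y. cmod (F y - G y) \<le> \<epsilon>"
    using assms(2,3) unfolding cstar_gen_def by blast
  then obtain g where g: "g \<in> star_alg S" and "G = \<Psi> g"
    using star_alg_image_subset[OF assms(1)] by blast
  have "g \<in> E"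
    using g star_alg_subset_E[OF assms(1)] by blast
  then have "\<forall>x. cmod (F (\<iota> x) - g x) \<le> \<epsilon>"
    using FG \<open>G = \<Psi> g\<close> eval_iota by metis
  with g FG \<open>G = \<Psi> g\<close> show ?thesis
    by blast
qed

text \<open>Pulling back along \<open>\<iota>\<close> gives the preimage, by isometry.\<close>

lemma cstar_gen_image_subset:
  assumes "S \<subseteq> E"
  shows "cstar_gen (\<Psi> ` S) \<subseteq> \<Psi> ` cstar_gen S"
proof
  fix F assume F: "F \<in> cstar_gen (\<Psi> ` S)"
  have f: "(\<lambda>x. F (\<iota> x)) \<in> cstar_gen S"
    unfolding cstar_gen_def
  proof (intro CollectI allI impI)
    fix \<epsilon> :: real assume "\<epsilon> > 0"
    then show "\<exists>g\<in>star_alg S. \<forall>x. cmod (F (\<iota> x) - g x) \<le> \<epsilon>"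
      using cstar_gen_image_approx[OF assms F] by blast
  qed
  have "\<Psi> (\<lambda>x. F (\<iota> x)) y = F y" for y
  proof -
    have "cmod (\<Psi> (\<lambda>x. F (\<iota> x)) y - F y) \<le> 0 + \<epsilon>" if "\<epsilon> > 0" for \<epsilon>
    proof -
      obtain g where g: "g \<in> star_alg S" and fg: "\<forall>x. cmod (F (\<iota> x) - g x) \<le> \<epsilon> / 2"
        and Fg: "\<forall>y. cmod (F y - \<Psi> g y) \<le> \<epsilon> / 2"
        using cstar_gen_image_approx[OF assms F half_gt_zero[OF \<open>\<epsilon> > 0\<close>]] by blast
      have "(\<lambda>x. F (\<iota> x)) \<in> E" "g \<in> E"
        using f g cstar_gen_subset_E[OF assms] star_alg_subset_E[OF assms] by auto
      then have "cmod (\<Psi> (\<lambda>x. F (\<iota> x)) y - \<Psi> g y) \<le> \<epsilon> / 2"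
        using contractive fg by blast
      then show ?thesis
        using Fg[rule_format, of y] norm_triangle_ineq4[of "\<Psi> (\<lambda>x. F (\<iota> x)) y - \<Psi> g y" "F y - \<Psi> g y"]
        by simp
    qed
    then show ?thesis
      using field_le_epsilon[of "cmod (\<Psi> (\<lambda>x. F (\<iota> x)) y - F y)" 0] by simp
  qed
  then have "F = \<Psi> (\<lambda>x. F (\<iota> x))"
    by auto
  then show "F \<in> \<Psi> ` cstar_gen S"
    using f by blast
qed

lemma image_cstar_gen: "S \<subseteq> E \<Longrightarrow> \<Psi> ` cstar_gen S = cstar_gen (\<Psi> ` S)"
  using image_cstar_gen_subset cstar_gen_image_subset by blast

end


section \<open>The homomorphism \<open>\<psi>\<close>\<close>

lemma GammaTilde_eq_closure_of_range: "GammaTilde A = Gamma_top closure_of range (Gamma_point A)"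
  by (simp add: GammaTilde_def full_SetCompr_eq)

lemma hat_eq_continuous_extension:
  assumes "continuous_extension Gamma_top (Gamma_point A) f h"
  shows "hat A f = h"
  unfolding hat_def
proof (rule the_equality)
  show "continuous_map (subtopology Gamma_top (GammaTilde A)) euclidean h \<and>
      (\<forall>j. h (Gamma_point A j) = f j) \<and> (\<forall>p. p \<notin> GammaTilde A \<longrightarrow> h p = 0)"
    using assms by (simp add: continuous_extension_def GammaTilde_eq_closure_of_range)
  show "k = h" if "continuous_map (subtopology Gamma_top (GammaTilde A)) euclidean k \<and>
      (\<forall>j. k (Gamma_point A j) = f j) \<and> (\<forall>p. p \<notin> GammaTilde A \<longrightarrow> k p = 0)" for k
    using that continuous_extension_unique[OF _ assms, of k]
    by (simp add: continuous_extension_def GammaTilde_eq_closure_of_range)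
qed

lemma continuous_extension_hat:
  assumes "f \<in> extendable Gamma_top (Gamma_point A)"
  shows "continuous_extension Gamma_top (Gamma_point A) f (hat A f)"
proof -
  obtain h where "continuous_extension Gamma_top (Gamma_point A) f h"
    using assms by (auto simp: extendable_def)
  then show ?thesis
    using hat_eq_continuous_extension by metis
qed

lemma psiA_eq:
  assumes "continuous_extension Gamma_top (Gamma_point A) f h"
  shows "psiA A f = (\<lambda>\<xi>. if \<xi> \<in> OmegaTilde A then h (phiA \<xi>) else 0)"
  unfolding psiA_def hat_eq_continuous_extension[OF assms] ..

lemma continuous_map_psiA:
  assumes "f \<in> extendable Gamma_top (Gamma_point A)"
  shows "continuous_map (subtopology powtop (OmegaTilde A)) euclidean (psiA A f)"
proof -
  have "continuous_map (subtopology powtop (OmegaTilde A)) (subtopology Gamma_top (GammaTilde A)) phiA"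
    by (rule continuous_map_into_subtopology[OF continuous_map_phiA_OmegaTilde])
      (use phiA_image_OmegaTilde_subset[of A] in \<open>simp add: image_subset_iff_funcset\<close>)
  moreover have "continuous_map (subtopology Gamma_top (GammaTilde A)) euclidean (hat A f)"
    using continuous_extension_hat[OF assms]
    by (simp add: continuous_extension_def GammaTilde_eq_closure_of_range)
  ultimately have "continuous_map (subtopology powtop (OmegaTilde A)) euclidean (hat A f \<circ> phiA)"
    by (rule continuous_map_compose)
  then show ?thesis
    by (rule continuous_map_eq) (simp add: psiA_def)
qed

lemma
  assumes f: "f \<in> extendable Gamma_top (Gamma_point A)" and g: "g \<in> extendable Gamma_top (Gamma_point A)"
  shows psiA_add: "psiA A (\<lambda>x. f x + g x) = (\<lambda>\<xi>. psiA A f \<xi> + psiA A g \<xi>)"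
    and psiA_mult: "psiA A (\<lambda>x. f x * g x) = (\<lambda>\<xi>. psiA A f \<xi> * psiA A g \<xi>)"
  using psiA_eq[OF continuous_extension_add[OF continuous_extension_hat[OF f] continuous_extension_hat[OF g]]]
    psiA_eq[OF continuous_extension_mult[OF continuous_extension_hat[OF f] continuous_extension_hat[OF g]]]
    psiA_eq[OF continuous_extension_hat[OF f]] psiA_eq[OF continuous_extension_hat[OF g]]
  by auto

lemma
  assumes f: "f \<in> extendable Gamma_top (Gamma_point A)"
  shows psiA_scale: "psiA A (\<lambda>x. c * f x) = (\<lambda>\<xi>. c * psiA A f \<xi>)"
    and psiA_cnj: "psiA A (\<lambda>x. cnj (f x)) = (\<lambda>\<xi>. cnj (psiA A f \<xi>))"
  using psiA_eq[OF continuous_extension_scale[OF continuous_extension_hat[OF f]]]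
    psiA_eq[OF continuous_extension_cnj[OF continuous_extension_hat[OF f]]]
    psiA_eq[OF continuous_extension_hat[OF f]]
  by auto

lemma psiA_norm_diff_le:
  assumes "f \<in> extendable Gamma_top (Gamma_point A)" "g \<in> extendable Gamma_top (Gamma_point A)"
    and bound: "\<And>x. cmod (f x - g x) \<le> \<epsilon>"
  shows "cmod (psiA A f \<xi> - psiA A g \<xi>) \<le> \<epsilon>"
  using continuous_extension_norm_diff_le[OF continuous_extension_hat[OF assms(1)]
      continuous_extension_hat[OF assms(2)] bound] order_trans[OF norm_ge_zero bound]
  by (simp add: psiA_def)

lemma psiA_apply_Gamma_point:
  assumes "f \<in> extendable Gamma_top (Gamma_point A)" "\<xi> \<in> OmegaTilde A" "phiA \<xi> = Gamma_point A j"
  shows "psiA A f \<xi> = f j"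
  using continuous_extension_hat[OF assms(1)] assms(2,3) by (simp add: psiA_def continuous_extension_def)

lemma psiA_isometric_star_hom:
  assumes "\<forall>i. \<exists>j. A i j"
  obtains \<iota> where "isometric_star_hom (extendable Gamma_top (Gamma_point A)) (psiA A) \<iota>"
proof -
  have "\<forall>j. \<exists>\<xi>. \<xi> \<in> OmegaTilde A \<and> phiA \<xi> = Gamma_point A j"
    using Gamma_point_in_phiA_image[OF assms] by (metis imageE)
  then obtain \<iota> where \<iota>: "\<forall>j. \<iota> j \<in> OmegaTilde A \<and> phiA (\<iota> j) = Gamma_point A j"
    by (rule choice[THEN exE])
  have "isometric_star_hom (extendable Gamma_top (Gamma_point A)) (psiA A) \<iota>"
  proof
    show "cstar_gen (extendable Gamma_top (Gamma_point A)) \<subseteq> extendable Gamma_top (Gamma_point A)"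
      by (rule extendable_cstar_gen[OF order_refl])
  next
    fix f x assume "f \<in> extendable Gamma_top (Gamma_point A)"
    then show "psiA A f (\<iota> x) = f x"
      using \<iota> psiA_apply_Gamma_point[of f A "\<iota> x" x] by simp
  qed (fact psiA_add psiA_scale psiA_mult psiA_cnj psiA_norm_diff_le)+
  then show thesis
    by (rule that)
qed

lemma Gamma_top_clopen_Some:
  "closedin Gamma_top {p. fst p = Some i}" "openin Gamma_top {p. fst p = Some i}"
proof -
  have fst: "continuous_map Gamma_top tildeG_top fst"
    by (simp add: Gamma_top_def continuous_map_fst)
  have "closedin tildeG_top {Some i}" "openin tildeG_top {Some i}"
    by (simp_all add: closedin_def openin_tildeG_top)
  from closedin_continuous_map_preimage[OF fst this(1)] openin_continuous_map_preimage[OF fst this(2)]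
  show "closedin Gamma_top {p. fst p = Some i}" "openin Gamma_top {p. fst p = Some i}"
    by simp_all
qed

lemma Gamma_top_clopen_coord:
  "closedin Gamma_top {p. snd p i}" "openin Gamma_top {p. snd p i}"
proof -
  have coord: "continuous_map Gamma_top euclidean ((\<lambda>f. f i) \<circ> snd)"
    unfolding Gamma_top_def by (rule continuous_map_compose[OF continuous_map_snd continuous_map_eval_bool_fun])
  have "closedin euclidean {True}" "openin euclidean {True}"
    by (simp_all add: closed_closedin[symmetric] open_discrete)
  from closedin_continuous_map_preimage[OF coord this(1)] openin_continuous_map_preimage[OF coord this(2)]
  show "closedin Gamma_top {p. snd p i}" "openin Gamma_top {p. snd p i}"
    by simp_all
qed

lemma continuous_extension_one:
  "continuous_extension Gamma_top (Gamma_point A) (\<lambda>_. 1)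
     (\<lambda>p. if p \<in> GammaTilde A \<and> p \<in> topspace Gamma_top then 1 else 0)"
  using continuous_extension_indicator[of "Gamma_point A" Gamma_top, OF _ closedin_topspace openin_topspace]
  unfolding GammaTilde_eq_closure_of_range topspace_Gamma_top by simp

lemma continuous_extension_delta:
  "continuous_extension Gamma_top (Gamma_point A) (delta i)
     (\<lambda>p. if p \<in> GammaTilde A \<and> p \<in> {p. fst p = Some i} then 1 else 0)"
proof -
  have "delta i = (\<lambda>j. if Gamma_point A j \<in> {p. fst p = Some i} then 1 else 0)"
    by (auto simp: delta_def)
  then show ?thesis
    using continuous_extension_indicator[OF _ Gamma_top_clopen_Some, of "Gamma_point A" i]
    unfolding GammaTilde_eq_closure_of_range by simp
qed

lemma continuous_extension_rho:
  "continuous_extension Gamma_top (Gamma_point A) (rho A i)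
     (\<lambda>p. if p \<in> GammaTilde A \<and> p \<in> {p. snd p i} then 1 else 0)"
proof -
  have "rho A i = (\<lambda>j. if Gamma_point A j \<in> {p. snd p i} then 1 else 0)"
    by (auto simp: rho_def col_def)
  then show ?thesis
    using continuous_extension_indicator[OF _ Gamma_top_clopen_coord, of "Gamma_point A" i]
    unfolding GammaTilde_eq_closure_of_range by simp
qed

lemma phiA_mem_GammaTilde: "\<xi> \<in> OmegaTilde A \<Longrightarrow> phiA \<xi> \<in> GammaTilde A"
  using phiA_image_OmegaTilde_subset by blast

lemma psiA_one: "psiA A (\<lambda>_. 1) = charfun (OmegaTilde A)"
  unfolding psiA_eq[OF continuous_extension_one] charfun_def by (rule ext) (simp add: phiA_mem_GammaTilde)

lemma psiA_delta: "psiA A (delta i) = PA A i"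
proof -
  have fst_phiA: "fst (phiA \<xi>) = Some i \<longleftrightarrow> gen i \<in> \<xi>" if "\<xi> \<in> OmegaTilde A" for \<xi>
    using sigma1_eq_Some_iff[of \<xi> A i] that OmegaTilde_subset_OmegaTau[of A] by (auto simp: phiA_def)
  show ?thesis
    unfolding psiA_eq[OF continuous_extension_delta] PA_def charfun_def Delta_def
    by (rule ext) (simp add: phiA_mem_GammaTilde fst_phiA)
qed

lemma psiA_rho: "psiA A (rho A i) = QA A i"
proof -
  have snd_phiA: "snd (phiA \<xi>) i \<longleftrightarrow> gen_inv i \<in> \<xi>" for \<xi>
    by (simp add: phiA_def Rxi_def)
  show ?thesis
    unfolding psiA_eq[OF continuous_extension_rho] QA_def charfun_def Delta_def
    by (rule ext) (simp add: phiA_mem_GammaTilde snd_phiA)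
qed

lemma generators_extendable:
  "{rho A i | i. True} \<union> {delta i | i. True} \<subseteq> extendable Gamma_top (Gamma_point A)"
  "(\<lambda>_. 1) \<in> extendable Gamma_top (Gamma_point A)"
  using extendableI[OF continuous_extension_rho] extendableI[OF continuous_extension_delta]
    extendableI[OF continuous_extension_one] by auto

lemma RAtilde_subset_extendable: "RAtilde A \<subseteq> extendable Gamma_top (Gamma_point A)"
  unfolding RAtilde_def using generators_extendable[of A] by (simp add: extendable_cstar_gen)

lemma psiA_image_generators:
  "psiA A ` ({rho A i | i. True} \<union> {delta i | i. True}) = {PA A i | i. True} \<union> {QA A i | i. True}"
proof -
  have ranges: "{rho A i | i. True} = range (rho A)" "{delta i | i. True} = range delta"
    "{PA A i | i. True} = range (PA A)" "{QA A i | i. True} = range (QA A)"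
    by auto
  show ?thesis
    unfolding ranges image_Un image_image psiA_rho psiA_delta by blast
qed

theorem proposition3p5:
  fixes A :: "'g \<Rightarrow> 'g \<Rightarrow> bool"
  assumes nonzero_rows: "\<forall>i. \<exists>j. A i j"
  shows "continuous_map (subtopology powtop (OmegaTilde A)) Gamma_top phiA
       \<and> phiA ` OmegaTilde A = GammaTilde A
       \<and> phiA ` Omega A = Gamma A
       \<and> (\<forall>f\<in>RAtilde A. continuous_map (subtopology powtop (OmegaTilde A)) euclidean (psiA A f))
       \<and> (\<forall>f\<in>RAtilde A. \<forall>g\<in>RAtilde A. psiA A (\<lambda>x. f x + g x) = (\<lambda>\<xi>. psiA A f \<xi> + psiA A g \<xi>))
       \<and> (\<forall>f\<in>RAtilde A. \<forall>c. psiA A (\<lambda>x. c * f x) = (\<lambda>\<xi>. c * psiA A f \<xi>))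
       \<and> (\<forall>f\<in>RAtilde A. \<forall>g\<in>RAtilde A. psiA A (\<lambda>x. f x * g x) = (\<lambda>\<xi>. psiA A f \<xi> * psiA A g \<xi>))
       \<and> (\<forall>f\<in>RAtilde A. psiA A (\<lambda>x. cnj (f x)) = (\<lambda>\<xi>. cnj (psiA A f \<xi>)))
       \<and> psiA A (\<lambda>_. 1) = charfun (OmegaTilde A)
       \<and> inj_on (psiA A) (RAtilde A)
       \<and> (\<forall>i. psiA A (delta i) = PA A i)
       \<and> (\<forall>i. psiA A (rho A i) = QA A i)
       \<and> psiA A ` RAtilde A
           = cstar_gen ({charfun (OmegaTilde A)} \<union> {PA A i | i. True} \<union> {QA A i | i. True})
       \<and> psiA A ` RA A = cstar_gen ({PA A i | i. True} \<union> {QA A i | i. True})"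
proof -
  let ?E = "extendable Gamma_top (Gamma_point A)"
  obtain \<iota> where "isometric_star_hom ?E (psiA A) \<iota>"
    using psiA_isometric_star_hom[OF nonzero_rows] .
  then interpret isometric_star_hom ?E "psiA A" \<iota> .
  have "psiA A ` RAtilde A = cstar_gen ({charfun (OmegaTilde A)} \<union> {PA A i | i. True} \<union> {QA A i | i. True})"
    and "psiA A ` RA A = cstar_gen ({PA A i | i. True} \<union> {QA A i | i. True})"
    unfolding RAtilde_def RA_def using generators_extendable[of A] psiA_image_generators[of A] psiA_one[of A]
    by (simp_all add: image_cstar_gen Un_assoc)
  moreover have "inj_on (psiA A) (RAtilde A)"
    using inj_on RAtilde_subset_extendable by (rule inj_on_subset)
  ultimately show ?thesis
    using continuous_map_phiA_OmegaTilde[of A] phiA_image_OmegaTilde[OF nonzero_rows]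
      phiA_image_Omega[OF nonzero_rows] psiA_one[of A] psiA_delta[of A] psiA_rho[of A]
      RAtilde_subset_extendable[of A]
    by (simp add: subset_iff continuous_map_psiA psiA_add psiA_scale psiA_mult psiA_cnj)
qed

end
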